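(* Assume the setting described in the context and let $T\in(0,\infty)$ and $\Theta\in C([0,T],\mathbb R^{\mathfrak d})$ satisfy for all $t\in[0,T]$ that $\Theta_t=\Theta_0-\int_0^t\mathcal G(\Theta_s)\,ds$. Then for all $t\in[0,T]$ it holds that $\mathcal L_\infty(\Theta_t)=\mathcal L_\infty(\Theta_0)-\int_0^t\|\mathcal G(\Theta_s)\|^2\,ds$.
   Context: Setting. Let $L,\mathfrak d\in\mathbb N=\{1,2,\dots\}$, $(\ell_k)_{k\in\mathbb N_0}\subseteq\mathbb N$, $a\in\mathbb R$, $b\in(a,\infty)$, $\mathscr A\in(0,\infty)$, $\mathscr B\in(\mathscr A,\infty)$ with $\mathfrak d=\sum_{k=1}^L\ell_k(\ell_{k-1}+1)$; let $\mathbf d_k=\sum_{h=1}^k\ell_h(\ell_{h-1}+1)$ for $k\in\mathbb N_0$. For $\theta=(\theta_1,\dots,\theta_{\mathfrak d})\in\mathbb R^{\mathfrak d}$, $k\in\{1,\dots,L\}$, $i\in\{1,\dots,\ell_k\}$, $j\in\{1,\dots,\ell_{k-1}\}$ let $\mathfrak w^{k,\theta}_{i,j}=\theta_{(i-1)\ell_{k-1}+j+\mathbf d_{k-1}}$ and $\mathfrak b^{k,\theta}_i=\theta_{\ell_k\ell_{k-1}+i+\mathbf d_{k-1}}$, let $\mathfrak w^{k,\theta}=(\mathfrak w^{k,\theta}_{i,j})_{i,j}\in\mathbb R^{\ell_k\times\ell_{k-1}}$, $\mathfrak b^{k,\theta}=(\mathfrak b^{k,\theta}_1,\dots,\mathfrak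 b^{k,\theta}_{\ell_k})\in\mathbb R^{\ell_k}$, and $\mathcal A^\theta_k\colon\mathbb R^{\ell_{k-1}}\to\mathbb R^{\ell_k}$, $\mathcal A^\theta_k(x)=\mathfrak b^{k,\theta}+\mathfrak w^{k,\theta}x$. Let $\mathscr R_\infty(x)=\max\{x,0\}$ and let $\mathscr R_r\colon\mathbb R\to\mathbb R$, $r\in[1,\infty)$, satisfy for all $r\in[1,\infty)$: $\mathscr R_r\in C^1(\mathbb R,\mathbb R)$, $\mathscr R_r(x)=0$ for all $x\le\mathscr A r^{-1}$, $0\le\mathscr R_r(y)\le\max\{y,0\}$ for all $y\in\mathbb R$, $\mathscr R_r(z)=z$ for all $z\ge\mathscr B r^{-1}$; assume $\sup_{r\in[1,\infty)}\sup_{x\in\mathbb R}|(\mathscr R_r)'(x)|<\infty$. $\|\cdot\|$ is the Euclidean norm on each $\mathbb R^n$; for $r\in[1,\infty]$, $\mathfrak M_r(x_1,\dots,x_n)=(\mathscr R_r(x_1),\dots,\mathscr R_r(x_n))$. For $r\in[1,\infty]$, $\theta\in\mathbb R^{\mathfrak d}$ define $\mathcal N^{k,\theta}_r\colon\mathbb R^{\ell_0}\to\mathbb R^{\ell_k}$, $k\in\{1,\dots,L\}$, by $\mathcal N^{1,\theta}_r=\mathcal A^\theta_1$ and $\mathcal N^{k+1,\theta}_r(x)=\mathcal A^\theta_{k+1}(\mathfrak M_{r^{1/k}}(\mathcal N^{k,\theta}_r(x)))$ (with $\infty^{1/k}=\infty$). Let $\mu$ be a measure on the Borel $\sigma$-algebra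 of $[a,b]^{\ell_0}$ with $\mu([a,b]^{\ell_0})\in\mathbb R$, let $f\colon[a,b]^{\ell_0}\to\mathbb R^{\ell_L}$ be measurable, and for $r\in[1,\infty]$ let $\mathcal L_r\colon\mathbb R^{\mathfrak d}\to\mathbb R$ be given by $\mathcal L_r(\theta)=\int_{[a,b]^{\ell_0}}\|\mathcal N^{L,\theta}_r(x)-f(x)\|^2\,\mu(dx)$ (these integrals are real numbers as part of the setting). Let $\mathcal G\colon\mathbb R^{\mathfrak d}\to\mathbb R^{\mathfrak d}$ satisfy $\mathcal G(\theta)=\lim_{r\to\infty}(\nabla\mathcal L_r)(\theta)$ for every $\theta$ for which $((\nabla\mathcal L_r)(\theta))_{r\in[1,\infty)}$ is convergent as $r\to\infty$. *)

theory Defs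
  imports "HOL-Analysis.Analysis"
begin

text \<open>Number of parameters in the first k layers: d_k = sum_{h=1}^k l_h (l_{h-1}+1).\<close>
definition dpar :: "(nat \<Rightarrow> nat) \<Rightarrow> nat \<Rightarrow> nat" where
  "dpar l k = (\<Sum>h=1..k. l h * (l (h - 1) + 1))"

text \<open>The parameter vector theta lives in real^'d; the coordinate theta_n (n in 1..dd)
  is  theta $ idx n  for a fixed bijection idx from {1..dd} onto the finite index type 'd.\<close>
definition weight :: "(nat \<Rightarrow> nat) \<Rightarrow> (nat \<Rightarrow> 'd::finite) \<Rightarrow> nat \<Rightarrow> real^'d \<Rightarrow> nat \<Rightarrow> nat \<Rightarrow> real" where
  "weight l idx k \<theta> i j = \<theta> $ idx ((i - 1) * l (k - 1) + j + dpar l (k - 1))"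

definition bias :: "(nat \<Rightarrow> nat) \<Rightarrow> (nat \<Rightarrow> 'd::finite) \<Rightarrow> nat \<Rightarrow> real^'d \<Rightarrow> nat \<Rightarrow> real" where
  "bias l idx k \<theta> i = \<theta> $ idx (l k * l (k - 1) + i + dpar l (k - 1))"

text \<open>Vectors in R^{l_k} are represented as functions nat => real, coordinates 1..l_k.\<close>
definition affine :: "(nat \<Rightarrow> nat) \<Rightarrow> (nat \<Rightarrow> 'd::finite) \<Rightarrow> nat \<Rightarrow> real^'d \<Rightarrow> (nat \<Rightarrow> real) \<Rightarrow> (nat \<Rightarrow> real)" where
  "affine l idx k \<theta> x = (\<lambda>i. bias l idx k \<theta> i + (\<Sum>j=1..l (k - 1). weight l idx k \<theta> i j * x j))"

fun net :: "(nat \<Rightarrow> nat) \<Rightarrow> (nat \<Rightarrow> 'd::finite) \<Rightarrow> (nat \<Rightarrow> real \<Rightarrow> real) \<Rightarrow> real^'d \<Rightarrow> nat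
             \<Rightarrow> (nat \<Rightarrow> real) \<Rightarrow> (nat \<Rightarrow> real)" where
  "net l idx act \<theta> 0 x = x"
| "net l idx act \<theta> (Suc 0) x = affine l idx 1 \<theta> x"
| "net l idx act \<theta> (Suc (Suc k)) x =
     affine l idx (Suc (Suc k)) \<theta> (\<lambda>i. act (Suc k) (net l idx act \<theta> (Suc k) x i))"

definition relu :: "real \<Rightarrow> real" where
  "relu x = max x 0"

definition act_r :: "(real \<Rightarrow> real \<Rightarrow> real) \<Rightarrow> real \<Rightarrow> nat \<Rightarrow> real \<Rightarrow> real" where
  "act_r R r k = R (r powr (1 / real k))"

definition risk :: "(nat \<Rightarrow> nat) \<Rightarrow> (nat \<Rightarrow> 'd::finite) \<Rightarrow> nat \<Rightarrow> (nat \<Rightarrow> real \<Rightarrow> real)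
      \<Rightarrow> (nat \<Rightarrow> real) measure \<Rightarrow> ((nat \<Rightarrow> real) \<Rightarrow> (nat \<Rightarrow> real)) \<Rightarrow> real^'d \<Rightarrow> real" where
  "risk l idx L act \<mu> f \<theta> =
     (\<integral>x. (\<Sum>i=1..l L. (net l idx act \<theta> L x i - f x i)\<^sup>2) \<partial>\<mu>)"

definition grad :: "('a::real_inner \<Rightarrow> real) \<Rightarrow> 'a \<Rightarrow> 'a" where
  "grad F \<theta> = (SOME g. (F has_derivative (\<lambda>h. g \<bullet> h)) (at \<theta>))"

end

theory Submission
  imports Defs
begin

(* For finite r the risk L_r is continuously differentiable: the network with the smoothed
   activations R_(r^(1/k)) is C^1 in the parameters, and on bounded parameter sets the loss and its
   gradient are dominated by an integrable function because the inputs lie in [a,b]^(l_0).  The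
   chain rule along the curve Theta, which is only an indefinite integral, gives
     L_r(Theta_t) = L_r(Theta_0) - int_0^t grad L_r(Theta_s) . G(Theta_s) ds.
   As r -> infinity the realisations converge to the ReLU realisation, and grad L_r converges
   pointwise to the gradient computed with the derivative 1_(0,infinity) of ReLU, which is G by
   hypothesis; the smoothed derivatives converge even at the kink because layer k converges at rate
   o(r^(-1/k)).  Dominated convergence in both integrals yields the claim. *)

section \<open>Differentiation under the integral sign and along integral curves\<close>

lemma abs_diff_le_if_gradient_bounded:
  fixes h :: "'v::euclidean_space \<Rightarrow> real"
  assumes "convex S"
    and deriv: "\<And>y. y \<in> S \<Longrightarrow> (h has_derivative (\<lambda>v. D y \<bullet> v)) (at y within S)"
    and bounded: "\<And>y. y \<in> S \<Longrightarrow> norm (D y) \<le> B"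
    and "x \<in> S" "z \<in> S"
  shows "\<bar>h z - h x\<bar> \<le> B * norm (z - x)"
proof -
  have "onorm (\<lambda>v. D y \<bullet> v) \<le> B" if "y \<in> S" for y
  proof (rule onorm_le)
    fix v
    have "norm (D y \<bullet> v) \<le> norm (D y) * norm v" by (simp add: Cauchy_Schwarz_ineq2)
    also have "\<dots> \<le> B * norm v" using bounded[OF that] by (simp add: mult_right_mono)
    finally show "norm (D y \<bullet> v) \<le> B * norm v" .
  qed
  then show ?thesis
    using differentiable_bound[where B=B, OF \<open>convex S\<close> deriv _ \<open>z \<in> S\<close> \<open>x \<in> S\<close>] by simp
qed

lemma has_derivative_integral_dominated:
  fixes h :: "'v::euclidean_space \<Rightarrow> 'a \<Rightarrow> real" and D :: "'v \<Rightarrow> 'a \<Rightarrow> 'v"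
  assumes int_h: "\<And>\<theta>. integrable M (h \<theta>)"
    and int_D: "integrable M (D \<theta>0)"
    and deriv: "\<And>\<theta> x. x \<in> space M \<Longrightarrow> ((\<lambda>\<theta>. h \<theta> x) has_derivative (\<lambda>v. D \<theta> x \<bullet> v)) (at \<theta>)"
    and int_w: "integrable M w"
    and dominated: "\<And>\<theta> x. norm (\<theta> - \<theta>0) \<le> 1 \<Longrightarrow> x \<in> space M \<Longrightarrow> norm (D \<theta> x) \<le> w x"
  shows "((\<lambda>\<theta>. \<integral>x. h \<theta> x \<partial>M) has_derivative (\<lambda>v. (\<integral>x. D \<theta>0 x \<partial>M) \<bullet> v)) (at \<theta>0)"
proof -
  let ?F = "\<lambda>\<theta>. \<integral>x. h \<theta> x \<partial>M"
  define q where "q y x = (h y x - h \<theta>0 x - D \<theta>0 x \<bullet> (y - \<theta>0)) /\<^sub>R norm (y - \<theta>0)" for y x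
  have q_bound: "norm (q y x) \<le> 2 * w x" if y: "norm (y - \<theta>0) \<le> 1" and x: "x \<in> space M" for y x
  proof -
    have "\<bar>h y x - h \<theta>0 x\<bar> \<le> w x * norm (y - \<theta>0)"
    proof (rule abs_diff_le_if_gradient_bounded[where S="cball \<theta>0 1" and D="\<lambda>\<theta>. D \<theta> x"])
      show "((\<lambda>\<theta>. h \<theta> x) has_derivative (\<lambda>v. D z x \<bullet> v)) (at z within cball \<theta>0 1)" for z
        using deriv[OF x] by (rule has_derivative_at_withinI)
      show "norm (D z x) \<le> w x" if "z \<in> cball \<theta>0 1" for z
        using dominated[OF _ x, of z] that by (simp add: dist_norm norm_minus_commute)
      show "y \<in> cball \<theta>0 1" using y by (simp add: dist_norm norm_minus_commute)
    qed simp_all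
    moreover have "\<bar>D \<theta>0 x \<bullet> (y - \<theta>0)\<bar> \<le> norm (D \<theta>0 x) * norm (y - \<theta>0)"
      by (rule Cauchy_Schwarz_ineq2)
    moreover have "norm (D \<theta>0 x) \<le> w x" using dominated[OF _ x, of \<theta>0] by simp
    then have "norm (D \<theta>0 x) * norm (y - \<theta>0) \<le> w x * norm (y - \<theta>0)" by (simp add: mult_right_mono)
    ultimately have "\<bar>h y x - h \<theta>0 x - D \<theta>0 x \<bullet> (y - \<theta>0)\<bar> \<le> 2 * w x * norm (y - \<theta>0)" by linarith
    moreover have "0 \<le> w x" using \<open>norm (D \<theta>0 x) \<le> w x\<close> norm_ge_zero[of "D \<theta>0 x"] by linarith
    ultimately show ?thesis unfolding q_def by (cases "y = \<theta>0") (simp_all add: divide_simps)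
  qed
  have "((\<lambda>y. \<integral>x. q y x \<partial>M) \<longlongrightarrow> 0) (at \<theta>0)"
    unfolding tendsto_at_iff_sequentially
  proof (intro allI impI)
    fix X :: "nat \<Rightarrow> 'v" assume X: "\<forall>i. X i \<in> UNIV - {\<theta>0}" "X \<longlonglongrightarrow> \<theta>0"
    from X(2) obtain N where N: "\<And>n. n \<ge> N \<Longrightarrow> norm (X n - \<theta>0) \<le> 1"
      by (metis LIMSEQ_iff_nz dist_norm less_imp_le zero_less_one)
    have "(\<lambda>n. \<integral>x. q (X (n + N)) x \<partial>M) \<longlonglongrightarrow> (\<integral>x. 0 \<partial>M)"
    proof (rule integral_dominated_convergence[where w="\<lambda>x. 2 * w x"])
      show "q (X (n + N)) \<in> borel_measurable M" for n
        unfolding q_def using int_h int_D by measurable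
      show "AE x in M. (\<lambda>n. q (X (n + N)) x) \<longlonglongrightarrow> 0"
      proof (rule AE_I2)
        fix x assume "x \<in> space M"
        then have "((\<lambda>y. q y x) \<longlongrightarrow> 0) (at \<theta>0)"
          using deriv unfolding has_derivative_at_within q_def by simp
        then show "(\<lambda>n. q (X (n + N)) x) \<longlonglongrightarrow> 0"
          using X by (auto simp: tendsto_at_iff_sequentially o_def intro: LIMSEQ_ignore_initial_segment)
      qed
      show "AE x in M. norm (q (X (n + N)) x) \<le> 2 * w x" for n
        using N q_bound by (auto intro: AE_I2)
    qed (use int_w in simp_all)
    then show "((\<lambda>y. \<integral>x. q y x \<partial>M) \<circ> X) \<longlonglongrightarrow> 0" by (simp add: LIMSEQ_offset o_def)
  qed
  moreover have "(\<integral>x. q y x \<partial>M) = (?F y - ?F \<theta>0 - (\<integral>x. D \<theta>0 x \<partial>M) \<bullet> (y - \<theta>0)) /\<^sub>R norm (y - \<theta>0)" for y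
    unfolding q_def using int_h int_D
    by (simp add: integral_diff integral_inner_left integral_divide_zero divide_inverse_commute)
  ultimately show ?thesis
    unfolding has_derivative_at_within by (simp add: bounded_linear_inner_right)
qed

lemma continuous_on_integral_dominated:
  fixes D :: "'v::euclidean_space \<Rightarrow> 'a \<Rightarrow> 'w::{banach,second_countable_topology}"
  assumes meas: "\<And>\<theta>. D \<theta> \<in> borel_measurable M"
    and cont: "\<And>x. x \<in> space M \<Longrightarrow> continuous_on UNIV (\<lambda>\<theta>. D \<theta> x)"
    and dominated: "\<And>\<rho>. \<exists>w. integrable M w \<and>
          (\<forall>\<theta> x. norm \<theta> \<le> \<rho> \<longrightarrow> x \<in> space M \<longrightarrow> norm (D \<theta> x) \<le> w x)"
  shows "continuous_on UNIV (\<lambda>\<theta>. \<integral>x. D \<theta> x \<partial>M)"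
proof (rule continuous_on_sequentiallyI)
  fix u :: "nat \<Rightarrow> 'v" and a assume u: "u \<longlonglongrightarrow> a"
  then have "Bseq u" by (intro convergent_imp_Bseq convergentI)
  then obtain K where K: "\<And>n. norm (u n) \<le> K" by (metis BseqE)
  obtain w where w: "integrable M w" "\<And>\<theta> x. norm \<theta> \<le> K \<Longrightarrow> x \<in> space M \<Longrightarrow> norm (D \<theta> x) \<le> w x"
    using dominated[of K] by blast
  show "(\<lambda>n. \<integral>x. D (u n) x \<partial>M) \<longlonglongrightarrow> (\<integral>x. D a x \<partial>M)"
  proof (rule integral_dominated_convergence[where w=w])
    show "AE x in M. (\<lambda>n. D (u n) x) \<longlonglongrightarrow> D a x"
    proof (rule AE_I2)
      fix x assume "x \<in> space M"
      then have "isCont (\<lambda>\<theta>. D \<theta> x) a" using cont by (simp add: continuous_on_eq_continuous_at)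
      then show "(\<lambda>n. D (u n) x) \<longlonglongrightarrow> D a x" using u by (rule isCont_tendsto_compose)
    qed
    show "AE x in M. norm (D (u n) x) \<le> w x" for n using w K by auto
  qed (use meas w in auto)
qed

lemma integral_dominated_convergence_eventually_at_top:
  fixes s :: "real \<Rightarrow> 'a \<Rightarrow> 'b::{banach, second_countable_topology}"
  assumes "f \<in> borel_measurable M" and meas: "\<forall>\<^sub>F t in at_top. s t \<in> borel_measurable M"
    and "integrable M w"
    and lim: "AE x in M. ((\<lambda>t. s t x) \<longlongrightarrow> f x) at_top"
    and bound: "\<forall>\<^sub>F t in at_top. AE x in M. norm (s t x) \<le> w x"
  shows "((\<lambda>t. integral\<^sup>L M (s t)) \<longlongrightarrow> integral\<^sup>L M f) at_top"
proof -
  obtain t0 where t0: "\<And>t. t \<ge> t0 \<Longrightarrow> s t \<in> borel_measurable M"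
    using meas by (auto simp: eventually_at_top_linorder)
  have eq: "\<forall>\<^sub>F t in at_top. s (max t t0) = s t"
    using eventually_ge_at_top[of t0] by eventually_elim simp
  have "((\<lambda>t. integral\<^sup>L M (s (max t t0))) \<longlongrightarrow> integral\<^sup>L M f) at_top"
  proof (rule integral_dominated_convergence_at_top[OF assms(1) t0[OF max.cobounded2] assms(3)])
    show "AE x in M. ((\<lambda>t. s (max t t0) x) \<longlongrightarrow> f x) at_top"
      using lim by eventually_elim (rule Lim_transform_eventually, use eq in \<open>auto elim: eventually_mono\<close>)
    show "\<forall>\<^sub>F t in at_top. AE x in M. norm (s (max t t0) x) \<le> w x"
      using bound eq by eventually_elim simp
  qed
  then show ?thesis by (rule Lim_transform_eventually) (use eq in \<open>auto elim: eventually_mono\<close>)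
qed

lemma grad_eq_if_has_derivative:
  fixes F :: "'a::euclidean_space \<Rightarrow> real"
  assumes "(F has_derivative (\<lambda>h. g \<bullet> h)) (at \<theta>)"
  shows "grad F \<theta> = g"
proof -
  have "(F has_derivative (\<lambda>h. grad F \<theta> \<bullet> h)) (at \<theta>)"
    unfolding grad_def using assms by (rule someI)
  then have "(\<lambda>h. grad F \<theta> \<bullet> h) = (\<lambda>h. g \<bullet> h)" using assms by (rule has_derivative_unique)
  then show ?thesis by (metis euclidean_eqI)
qed

lemma linearization_error_bound:
  fixes F :: "'v::euclidean_space \<Rightarrow> real"
  assumes deriv: "\<And>y. (F has_derivative (\<lambda>h. DF y \<bullet> h)) (at y)"
    and close: "\<And>y. y \<in> closed_segment x z \<Longrightarrow> norm (DF y - DF x) \<le> e"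
  shows "\<bar>F z - F x - DF x \<bullet> (z - x)\<bar> \<le> e * norm (z - x)"
proof -
  have "((\<lambda>y. F y - DF x \<bullet> y) has_derivative (\<lambda>h. (DF y - DF x) \<bullet> h)) (at y within closed_segment x z)" for y
    by (rule has_derivative_at_withinI, rule has_derivative_eq_rhs,
        rule has_derivative_diff[OF deriv has_derivative_inner_right[OF has_derivative_ident]])
       (auto simp: inner_diff_left)
  from abs_diff_le_if_gradient_bounded[OF convex_closed_segment this close]
  show ?thesis by (simp add: inner_diff_right algebra_simps)
qed

lemma abs_diff_le_if_local_increments_le:
  fixes \<phi> \<Psi> :: "real \<Rightarrow> real"
  assumes "a \<le> b" "\<delta> > 0"
    and close: "\<And>u v. a \<le> u \<Longrightarrow> u \<le> v \<Longrightarrow> v \<le> b \<Longrightarrow> v - u < \<delta> \<Longrightarrow> \<bar>\<phi> v - \<phi> u\<bar> \<le> e * (\<Psi> v - \<Psi> u)"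
  shows "\<bar>\<phi> b - \<phi> a\<bar> \<le> e * (\<Psi> b - \<Psi> a)"
proof -
  obtain n :: nat where n: "(b - a) / \<delta> < real n" using reals_Archimedean2 by blast
  then have "n > 0" using \<open>a \<le> b\<close> \<open>\<delta> > 0\<close> by (metis divide_nonneg_pos not_gr_zero of_nat_0 not_less diff_ge_0_iff_ge)
  define p where "p k = a + (b - a) * real k / real n" for k
  have ends: "p 0 = a" "p n = b" using \<open>n > 0\<close> unfolding p_def by simp_all
  have p_step: "p (Suc k) - p k = (b - a) / real n" for k
    using \<open>n > 0\<close> unfolding p_def by (simp add: field_simps)
  have "(b - a) / real n < \<delta>" using n \<open>n > 0\<close> \<open>\<delta> > 0\<close> by (simp add: field_simps)
  have step: "\<bar>\<phi> (p (Suc k)) - \<phi> (p k)\<bar> \<le> e * (\<Psi> (p (Suc k)) - \<Psi> (p k))" if "k < n" for k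
  proof (rule close)
    have "(b - a) * real (Suc k) \<le> (b - a) * real n"
      using \<open>a \<le> b\<close> \<open>k < n\<close> by (intro mult_left_mono) auto
    then have "(b - a) * real (Suc k) / real n \<le> b - a"
      using \<open>n > 0\<close> by (simp add: pos_divide_le_eq)
    moreover have "(b - a) * real k / real n \<ge> 0" using \<open>a \<le> b\<close> by simp
    ultimately show "a \<le> p k" "p (Suc k) \<le> b" unfolding p_def by auto
    have "0 \<le> (b - a) / real n" using \<open>a \<le> b\<close> by simp
    then show "p k \<le> p (Suc k)" "p (Suc k) - p k < \<delta>"
      using p_step[of k] \<open>(b - a) / real n < \<delta>\<close> by linarith+
  qed
  have "\<bar>\<phi> b - \<phi> a\<bar> = \<bar>\<Sum>k<n. \<phi> (p (Suc k)) - \<phi> (p k)\<bar>"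
    using sum_lessThan_telescope[where f="\<lambda>k. \<phi> (p k)"] ends by simp
  also have "\<dots> \<le> (\<Sum>k<n. e * (\<Psi> (p (Suc k)) - \<Psi> (p k)))"
    using step by (intro order_trans[OF sum_abs] sum_mono) auto
  also have "\<dots> = e * (\<Psi> b - \<Psi> a)"
    using sum_lessThan_telescope[where f="\<lambda>k. \<Psi> (p k)"] ends by (simp add: sum_distrib_left[symmetric])
  finally show ?thesis .
qed

lemma eq_if_increments_dominated:
  fixes \<phi> \<Psi> :: "real \<Rightarrow> real"
  assumes "a \<le> b"
    and dominated: "\<And>e. e > 0 \<Longrightarrow> \<exists>\<delta>>0. \<forall>u v. a \<le> u \<longrightarrow> u \<le> v \<longrightarrow> v \<le> b \<longrightarrow> v - u < \<delta> \<longrightarrow>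
          \<bar>\<phi> v - \<phi> u\<bar> \<le> e * (\<Psi> v - \<Psi> u)"
  shows "\<phi> b = \<phi> a"
proof -
  have "\<bar>\<phi> b - \<phi> a\<bar> \<le> 0 + e" if "e > 0" for e
  proof -
    define e' where "e' = e / (\<bar>\<Psi> b - \<Psi> a\<bar> + 1)"
    have "e' > 0" using that by (simp add: e'_def add_pos_nonneg)
    then obtain \<delta> where "\<delta> > 0" and close: "\<forall>u v. a \<le> u \<longrightarrow> u \<le> v \<longrightarrow> v \<le> b \<longrightarrow> v - u < \<delta> \<longrightarrow>
        \<bar>\<phi> v - \<phi> u\<bar> \<le> e' * (\<Psi> v - \<Psi> u)"
      using dominated by blast
    have "\<bar>\<phi> b - \<phi> a\<bar> \<le> e' * (\<Psi> b - \<Psi> a)"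
      by (rule abs_diff_le_if_local_increments_le[OF \<open>a \<le> b\<close> \<open>\<delta> > 0\<close>]) (use close in blast)
    also have "\<dots> \<le> e' * \<bar>\<Psi> b - \<Psi> a\<bar>" using \<open>e' > 0\<close> by (simp add: mult_left_mono)
    also have "\<dots> \<le> e" using that unfolding e'_def by (simp add: field_simps)
    finally show ?thesis by simp
  qed
  then have "\<bar>\<phi> b - \<phi> a\<bar> \<le> 0" by (rule field_le_epsilon)
  then show ?thesis by simp
qed

lemma set_integral_split_interval:
  fixes k :: "real \<Rightarrow> 'b::{banach, second_countable_topology}"
  assumes "set_integrable lborel {a..v} k" "a \<le> u" "u \<le> v"
  shows "(LINT s:{a..v}|lborel. k s) = (LINT s:{a..u}|lborel. k s) + (LINT s:{u<..v}|lborel. k s)"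
proof -
  have "{a..v} = {a..u} \<union> {u<..v}" using assms by auto
  moreover have "set_integrable lborel {a..u} k" "set_integrable lborel {u<..v} k"
    using assms by (auto intro: set_integrable_subset)
  ultimately show ?thesis by (simp add: set_integral_Un disjoint_iff)
qed

lemma integral_curve_increment_bound:
  fixes F :: "'v::euclidean_space \<Rightarrow> real" and \<Theta> g :: "real \<Rightarrow> 'v"
  assumes deriv: "\<And>y. (F has_derivative (\<lambda>h. DF y \<bullet> h)) (at y)"
    and int_g: "set_integrable lborel {u<..v} g"
    and int_DFg: "set_integrable lborel {u<..v} (\<lambda>s. DF (\<Theta> s) \<bullet> g s)"
    and increment: "\<Theta> v - \<Theta> u = - (LINT s:{u<..v}|lborel. g s)"
    and "0 \<le> e"
    and close_path: "\<And>s. s \<in> {u<..v} \<Longrightarrow> norm (DF (\<Theta> s) - DF (\<Theta> u)) \<le> e"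
    and close_segment: "\<And>y. y \<in> closed_segment (\<Theta> u) (\<Theta> v) \<Longrightarrow> norm (DF y - DF (\<Theta> u)) \<le> e"
  shows "\<bar>F (\<Theta> v) - F (\<Theta> u) + (LINT s:{u<..v}|lborel. DF (\<Theta> s) \<bullet> g s)\<bar>
           \<le> 2 * e * (LINT s:{u<..v}|lborel. norm (g s))"
proof -
  let ?I = "\<lambda>h. LINT s:{u<..v}|lborel. h s"
  have int_norm_g: "set_integrable lborel {u<..v} (\<lambda>s. norm (g s))"
    using int_g by (rule set_integrable_norm)
  have int_const_g: "set_integrable lborel {u<..v} (\<lambda>s. DF (\<Theta> u) \<bullet> g s)"
    using integrable_inner_right[OF int_g[unfolded set_integrable_def], of "DF (\<Theta> u)"]
    unfolding set_integrable_def by simp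
  have int_diff: "set_integrable lborel {u<..v} (\<lambda>s. (DF (\<Theta> s) - DF (\<Theta> u)) \<bullet> g s)"
    using int_DFg int_const_g unfolding inner_diff_left by (rule set_integral_diff)
  have "DF (\<Theta> u) \<bullet> (LINT s|lborel. indicator {u<..v} s *\<^sub>R g s)
      = (LINT s|lborel. DF (\<Theta> u) \<bullet> (indicator {u<..v} s *\<^sub>R g s))"
    by (rule integral_inner_right[symmetric]) (use int_g in \<open>simp add: set_integrable_def\<close>)
  then have "DF (\<Theta> u) \<bullet> (\<Theta> v - \<Theta> u) = - ?I (\<lambda>s. DF (\<Theta> u) \<bullet> g s)"
    unfolding increment set_lebesgue_integral_def by (simp add: inner_minus_right)
  then have split: "F (\<Theta> v) - F (\<Theta> u) + ?I (\<lambda>s. DF (\<Theta> s) \<bullet> g s)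
      = (F (\<Theta> v) - F (\<Theta> u) - DF (\<Theta> u) \<bullet> (\<Theta> v - \<Theta> u)) + ?I (\<lambda>s. (DF (\<Theta> s) - DF (\<Theta> u)) \<bullet> g s)"
    using int_DFg int_const_g by (simp add: inner_diff_left set_integral_diff)
  have "norm (\<Theta> v - \<Theta> u) \<le> ?I (\<lambda>s. norm (g s))"
    unfolding increment norm_minus_cancel using int_g by (rule set_integral_norm_bound)
  then have linear_part: "\<bar>F (\<Theta> v) - F (\<Theta> u) - DF (\<Theta> u) \<bullet> (\<Theta> v - \<Theta> u)\<bar> \<le> e * ?I (\<lambda>s. norm (g s))"
    using linearization_error_bound[OF deriv close_segment] \<open>0 \<le> e\<close>
    by (meson mult_left_mono order_trans)
  have "norm (?I (\<lambda>s. (DF (\<Theta> s) - DF (\<Theta> u)) \<bullet> g s)) \<le> ?I (\<lambda>s. norm ((DF (\<Theta> s) - DF (\<Theta> u)) \<bullet> g s))"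
    using int_diff by (rule set_integral_norm_bound)
  also have "\<dots> \<le> ?I (\<lambda>s. e * norm (g s))"
  proof (rule set_integral_mono)
    show "set_integrable lborel {u<..v} (\<lambda>s. norm ((DF (\<Theta> s) - DF (\<Theta> u)) \<bullet> g s))"
      using int_diff by (rule set_integrable_norm)
    show "set_integrable lborel {u<..v} (\<lambda>s. e * norm (g s))"
      using int_norm_g by (rule set_integrable_mult_right)
    fix s assume "s \<in> {u<..v}"
    have "norm ((DF (\<Theta> s) - DF (\<Theta> u)) \<bullet> g s) \<le> norm (DF (\<Theta> s) - DF (\<Theta> u)) * norm (g s)"
      by (simp add: Cauchy_Schwarz_ineq2)
    also have "\<dots> \<le> e * norm (g s)" using close_path[OF \<open>s \<in> {u<..v}\<close>] by (simp add: mult_right_mono)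
    finally show "norm ((DF (\<Theta> s) - DF (\<Theta> u)) \<bullet> g s) \<le> e * norm (g s)" .
  qed
  finally have "\<bar>?I (\<lambda>s. (DF (\<Theta> s) - DF (\<Theta> u)) \<bullet> g s)\<bar> \<le> e * ?I (\<lambda>s. norm (g s))" by simp
  with linear_part show ?thesis unfolding split by linarith
qed

lemma set_integrable_inner_along_curve:
  fixes D :: "'v::euclidean_space \<Rightarrow> 'v" and \<Theta> g :: "real \<Rightarrow> 'v"
  assumes D_cont: "continuous_on UNIV D" and \<Theta>_cont: "continuous_on {0..T} \<Theta>"
    and int_g: "set_integrable lborel {0..T} g"
  shows "set_integrable lborel {0..T} (\<lambda>s. D (\<Theta> s) \<bullet> g s)"
proof -
  have cont: "continuous_on {0..T} (\<lambda>s. D (\<Theta> s))"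
    by (rule continuous_on_compose2[OF D_cont \<Theta>_cont]) simp
  then obtain B where B: "\<And>s. s \<in> {0..T} \<Longrightarrow> norm (D (\<Theta> s)) \<le> B"
    using compact_imp_bounded[OF compact_continuous_image[OF cont compact_Icc]]
    by (meson bounded_iff imageI)
  show ?thesis
  proof (rule set_integrable_bound[where f="\<lambda>s. B *\<^sub>R g s"])
    show "set_integrable lborel {0..T} (\<lambda>s. B *\<^sub>R g s)"
      using int_g by (rule set_integrable_scaleR_right)
    have "(\<lambda>s. indicator {0..T} s *\<^sub>R D (\<Theta> s)) \<in> borel_measurable lborel"
      unfolding measurable_lborel2 by (rule borel_measurable_continuous_on_indicator[OF _ cont]) simp
    then have "(\<lambda>s. (indicator {0..T} s *\<^sub>R D (\<Theta> s)) \<bullet> (indicator {0..T} s *\<^sub>R g s)) \<in> borel_measurable lborel"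
      using int_g unfolding set_integrable_def by measurable
    then show "set_borel_measurable lborel {0..T} (\<lambda>s. D (\<Theta> s) \<bullet> g s)"
      unfolding set_borel_measurable_def by (rule measurable_cong[THEN iffD1, rotated]) (auto simp: indicator_def)
    show "AE s\<in>{0..T} in lborel. norm (D (\<Theta> s) \<bullet> g s) \<le> norm (B *\<^sub>R g s)"
    proof (rule AE_I2, intro impI)
      fix s assume s: "s \<in> {0..T}"
      have "norm (D (\<Theta> s) \<bullet> g s) \<le> norm (D (\<Theta> s)) * norm (g s)" by (simp add: Cauchy_Schwarz_ineq2)
      also have "\<dots> \<le> B * norm (g s)" using B[OF s] by (simp add: mult_right_mono)
      also have "\<dots> \<le> norm (B *\<^sub>R g s)" by (simp add: mult_right_mono)
      finally show "norm (D (\<Theta> s) \<bullet> g s) \<le> norm (B *\<^sub>R g s)" .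
    qed
  qed
qed

lemma uniformly_close_along_curve:
  fixes D :: "'v::euclidean_space \<Rightarrow> 'v" and \<Theta> :: "real \<Rightarrow> 'v"
  assumes D_cont: "continuous_on UNIV D" and \<Theta>_cont: "continuous_on {0..T} \<Theta>" and "e > 0"
  obtains \<delta> where "\<delta> > 0"
    and "\<And>u v s. 0 \<le> u \<Longrightarrow> u \<le> v \<Longrightarrow> v \<le> T \<Longrightarrow> v - u < \<delta> \<Longrightarrow> s \<in> {u..v} \<Longrightarrow>
           norm (D (\<Theta> s) - D (\<Theta> u)) < e"
    and "\<And>u v y. 0 \<le> u \<Longrightarrow> u \<le> v \<Longrightarrow> v \<le> T \<Longrightarrow> v - u < \<delta> \<Longrightarrow> y \<in> closed_segment (\<Theta> u) (\<Theta> v) \<Longrightarrow>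
           norm (D y - D (\<Theta> u)) < e"
proof -
  obtain \<rho> where "\<And>s. s \<in> {0..T} \<Longrightarrow> norm (\<Theta> s) \<le> \<rho>"
    using compact_imp_bounded[OF compact_continuous_image[OF \<Theta>_cont compact_Icc]]
    by (meson bounded_iff imageI)
  then have \<rho>: "\<Theta> s \<in> cball 0 \<rho>" if "s \<in> {0..T}" for s using that by simp
  have "uniformly_continuous_on (cball 0 \<rho>) D"
    using D_cont by (intro compact_uniformly_continuous) (auto intro: continuous_on_subset)
  then obtain \<delta>1 where "\<delta>1 > 0" and D_close: "\<And>y z. y \<in> cball 0 \<rho> \<Longrightarrow> z \<in> cball 0 \<rho> \<Longrightarrow>
      dist z y < \<delta>1 \<Longrightarrow> dist (D z) (D y) < e"
    using \<open>e > 0\<close> unfolding uniformly_continuous_on_def by metis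
  have "uniformly_continuous_on {0..T} \<Theta>"
    using \<Theta>_cont by (intro compact_uniformly_continuous) auto
  then obtain \<delta> where "\<delta> > 0" and \<Theta>_close: "\<And>s s'. s \<in> {0..T} \<Longrightarrow> s' \<in> {0..T} \<Longrightarrow>
      dist s' s < \<delta> \<Longrightarrow> dist (\<Theta> s') (\<Theta> s) < \<delta>1"
    using \<open>\<delta>1 > 0\<close> unfolding uniformly_continuous_on_def by metis
  show thesis
  proof (rule that[OF \<open>\<delta> > 0\<close>])
    fix u v assume uv: "0 \<le> u" "u \<le> v" "v \<le> T" "v - u < \<delta>"
    have near: "dist (\<Theta> s) (\<Theta> u) < \<delta>1" if "s \<in> {u..v}" for s
      using \<Theta>_close[of u s] that uv by (auto simp: dist_real_def)
    show "norm (D (\<Theta> s) - D (\<Theta> u)) < e" if "s \<in> {u..v}" for s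
    proof -
      have "s \<in> {0..T}" "u \<in> {0..T}" using that uv by auto
      then show ?thesis using D_close[OF \<rho> \<rho> near[OF that]] by (simp add: dist_norm)
    qed
    show "norm (D y - D (\<Theta> u)) < e" if y: "y \<in> closed_segment (\<Theta> u) (\<Theta> v)" for y
    proof -
      have "u \<in> {0..T}" "v \<in> {0..T}" using uv by auto
      then have "y \<in> cball 0 \<rho>" using closed_segment_subset[OF \<rho> \<rho> convex_cball] y by blast
      moreover have "dist y (\<Theta> u) < \<delta>1"
        using dist_in_closed_segment[OF y] near[of v] uv by (simp add: dist_commute)
      ultimately show ?thesis using D_close[OF \<rho>[OF \<open>u \<in> {0..T}\<close>]] by (simp add: dist_norm)
    qed
  qed
qed

text \<open>The curve is merely an indefinite integral of an integrable function, so the chain rule is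
  proved by hand: on short intervals the increments of \<open>F \<circ> \<Theta> + \<integral> DF \<Theta> \<bullet> g\<close> are \<open>o(1)\<close> times those
  of \<open>\<integral> |g|\<close>.\<close>

lemma integral_curve_chain_rule:
  fixes F :: "'v::euclidean_space \<Rightarrow> real" and \<Theta> g :: "real \<Rightarrow> 'v"
  assumes deriv: "\<And>y. (F has_derivative (\<lambda>h. DF y \<bullet> h)) (at y)"
    and DF_cont: "continuous_on UNIV DF"
    and \<Theta>_cont: "continuous_on {0..T} \<Theta>"
    and int_g: "set_integrable lborel {0..T} g"
    and \<Theta>_eq: "\<And>t. t \<in> {0..T} \<Longrightarrow> \<Theta> t = \<Theta> 0 - (LINT s:{0..t}|lborel. g s)"
    and t: "t \<in> {0..T}"
  shows "F (\<Theta> t) = F (\<Theta> 0) - (LINT s:{0..t}|lborel. DF (\<Theta> s) \<bullet> g s)"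
proof -
  have int_DFg: "set_integrable lborel {0..T} (\<lambda>s. DF (\<Theta> s) \<bullet> g s)"
    using DF_cont \<Theta>_cont int_g by (rule set_integrable_inner_along_curve)
  define \<phi> where "\<phi> u = F (\<Theta> u) + (LINT s:{0..u}|lborel. DF (\<Theta> s) \<bullet> g s)" for u
  define \<Psi> where "\<Psi> u = (LINT s:{0..u}|lborel. norm (g s))" for u
  have "\<phi> t = \<phi> 0"
  proof (rule eq_if_increments_dominated[where \<phi>=\<phi> and \<Psi>=\<Psi> and a=0 and b=t])
    fix e :: real assume "e > 0"
    then obtain \<delta> where "\<delta> > 0"
      and close_path: "\<And>u v s. 0 \<le> u \<Longrightarrow> u \<le> v \<Longrightarrow> v \<le> T \<Longrightarrow> v - u < \<delta> \<Longrightarrow> s \<in> {u..v} \<Longrightarrow>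
           norm (DF (\<Theta> s) - DF (\<Theta> u)) < e / 2"
      and close_segment: "\<And>u v y. 0 \<le> u \<Longrightarrow> u \<le> v \<Longrightarrow> v \<le> T \<Longrightarrow> v - u < \<delta> \<Longrightarrow>
           y \<in> closed_segment (\<Theta> u) (\<Theta> v) \<Longrightarrow> norm (DF y - DF (\<Theta> u)) < e / 2"
      using uniformly_close_along_curve[OF DF_cont \<Theta>_cont, of "e / 2"] by auto
    have "\<bar>\<phi> v - \<phi> u\<bar> \<le> e * (\<Psi> v - \<Psi> u)" if uv: "0 \<le> u" "u \<le> v" "v \<le> t" "v - u < \<delta>" for u v
    proof -
      have "v \<le> T" using uv t by simp
      have "\<bar>F (\<Theta> v) - F (\<Theta> u) + (LINT s:{u<..v}|lborel. DF (\<Theta> s) \<bullet> g s)\<bar>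
          \<le> 2 * (e / 2) * (LINT s:{u<..v}|lborel. norm (g s))"
      proof (rule integral_curve_increment_bound[OF deriv])
        show "set_integrable lborel {u<..v} g" "set_integrable lborel {u<..v} (\<lambda>s. DF (\<Theta> s) \<bullet> g s)"
          using int_g int_DFg uv \<open>v \<le> T\<close> by (auto intro: set_integrable_subset)
        show "\<Theta> v - \<Theta> u = - (LINT s:{u<..v}|lborel. g s)"
          using \<Theta>_eq[of u] \<Theta>_eq[of v] set_integral_split_interval[of 0 v g u]
            set_integrable_subset[OF int_g, of "{0..v}"] uv \<open>v \<le> T\<close> by auto
        show "norm (DF (\<Theta> s) - DF (\<Theta> u)) \<le> e / 2" if "s \<in> {u<..v}" for s
          using close_path[OF uv(1,2) \<open>v \<le> T\<close> uv(4), of s] that by simp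
        show "norm (DF y - DF (\<Theta> u)) \<le> e / 2" if "y \<in> closed_segment (\<Theta> u) (\<Theta> v)" for y
          using close_segment[OF uv(1,2) \<open>v \<le> T\<close> uv(4) that] by simp
      qed (use \<open>e > 0\<close> in simp)
      moreover have "\<phi> v - \<phi> u = F (\<Theta> v) - F (\<Theta> u) + (LINT s:{u<..v}|lborel. DF (\<Theta> s) \<bullet> g s)"
        using set_integral_split_interval[OF set_integrable_subset[OF int_DFg] uv(1,2)] uv \<open>v \<le> T\<close>
        unfolding \<phi>_def by auto
      moreover have "\<Psi> v - \<Psi> u = (LINT s:{u<..v}|lborel. norm (g s))"
        using set_integral_split_interval[OF set_integrable_subset[OF set_integrable_norm[OF int_g]] uv(1,2)]
          uv \<open>v \<le> T\<close>
        unfolding \<Psi>_def by auto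
      ultimately show ?thesis by simp
    qed
    with \<open>\<delta> > 0\<close> show "\<exists>\<delta>>0. \<forall>u v. 0 \<le> u \<longrightarrow> u \<le> v \<longrightarrow> v \<le> t \<longrightarrow> v - u < \<delta> \<longrightarrow>
        \<bar>\<phi> v - \<phi> u\<bar> \<le> e * (\<Psi> v - \<Psi> u)" by blast
  qed (use t in simp)
  moreover have "(LINT s:{0..0}|lborel. DF (\<Theta> s) \<bullet> g s) = 0"
    unfolding set_lebesgue_integral_def
    by (rule integral_eq_zero_AE) (use AE_lborel_singleton[of 0] in \<open>auto elim!: eventually_mono\<close>)
  ultimately show ?thesis unfolding \<phi>_def by simp
qed

lemma tendsto_integral_inner_along_curve:
  fixes D :: "real \<Rightarrow> 'v::euclidean_space \<Rightarrow> 'v" and \<Theta> :: "real \<Rightarrow> 'v"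
  assumes D_cont: "\<And>r. r \<ge> 1 \<Longrightarrow> continuous_on UNIV (D r)"
    and D_lim: "\<And>\<theta>. ((\<lambda>r. D r \<theta>) \<longlongrightarrow> G \<theta>) at_top"
    and D_bound: "\<And>\<theta> r. norm \<theta> \<le> \<rho> \<Longrightarrow> r \<ge> 1 \<Longrightarrow> norm (D r \<theta>) \<le> K"
    and \<Theta>_cont: "continuous_on {0..t} \<Theta>" and \<Theta>_bound: "\<And>s. s \<in> {0..t} \<Longrightarrow> norm (\<Theta> s) \<le> \<rho>"
    and G_int: "set_integrable lborel {0..t} (\<lambda>s. G (\<Theta> s))"
  shows "((\<lambda>r. LINT s:{0..t}|lborel. D r (\<Theta> s) \<bullet> G (\<Theta> s)) \<longlongrightarrow> (LINT s:{0..t}|lborel. (norm (G (\<Theta> s)))\<^sup>2))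
           at_top"
  unfolding set_lebesgue_integral_def
proof (rule integral_dominated_convergence_eventually_at_top[where w="\<lambda>s. indicator {0..t} s *\<^sub>R (K * norm (G (\<Theta> s)))"])
  have G_meas: "(\<lambda>s. indicator {0..t} s *\<^sub>R G (\<Theta> s)) \<in> borel_measurable lborel"
    using G_int unfolding set_integrable_def by auto
  then have "(\<lambda>s. (indicator {0..t} s *\<^sub>R G (\<Theta> s)) \<bullet> (indicator {0..t} s *\<^sub>R G (\<Theta> s))) \<in> borel_measurable lborel"
    by measurable
  then show "(\<lambda>s. indicator {0..t} s *\<^sub>R (norm (G (\<Theta> s)))\<^sup>2) \<in> borel_measurable lborel"
    by (rule measurable_cong[THEN iffD1, rotated]) (auto simp: indicator_def power2_norm_eq_inner)
  have "(\<lambda>s. indicator {0..t} s *\<^sub>R (D r (\<Theta> s) \<bullet> G (\<Theta> s))) \<in> borel_measurable lborel" if "r \<ge> 1" for r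
  proof -
    have "(\<lambda>s. indicator {0..t} s *\<^sub>R D r (\<Theta> s)) \<in> borel_measurable lborel"
      unfolding measurable_lborel2
      by (rule borel_measurable_continuous_on_indicator[OF _ continuous_on_compose2[OF D_cont[OF that] \<Theta>_cont]]) auto
    then have "(\<lambda>s. (indicator {0..t} s *\<^sub>R D r (\<Theta> s)) \<bullet> (indicator {0..t} s *\<^sub>R G (\<Theta> s))) \<in> borel_measurable lborel"
      using G_meas by measurable
    then show ?thesis by (rule measurable_cong[THEN iffD1, rotated]) (auto simp: indicator_def)
  qed
  then show "\<forall>\<^sub>F r in at_top. (\<lambda>s. indicator {0..t} s *\<^sub>R (D r (\<Theta> s) \<bullet> G (\<Theta> s))) \<in> borel_measurable lborel"
    by (rule eventually_mono[OF eventually_ge_at_top[of "1::real"]])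
  have "integrable lborel (\<lambda>s. K * norm (indicator {0..t} s *\<^sub>R G (\<Theta> s)))"
    using G_int unfolding set_integrable_def by (intro integrable_mult_right integrable_norm)
  then show "integrable lborel (\<lambda>s. indicator {0..t} s *\<^sub>R (K * norm (G (\<Theta> s))))"
    by (rule Bochner_Integration.integrable_cong[THEN iffD1, rotated 2]) (auto simp: indicator_def)
  show "AE s in lborel. ((\<lambda>r. indicator {0..t} s *\<^sub>R (D r (\<Theta> s) \<bullet> G (\<Theta> s))) \<longlongrightarrow>
      indicator {0..t} s *\<^sub>R (norm (G (\<Theta> s)))\<^sup>2) at_top"
    by (intro AE_I2 tendsto_scaleR tendsto_const)
       (simp add: power2_norm_eq_inner tendsto_inner[OF D_lim tendsto_const])
  have dominated: "norm (indicator {0..t} s *\<^sub>R (D r (\<Theta> s) \<bullet> G (\<Theta> s)))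
      \<le> indicator {0..t} s *\<^sub>R (K * norm (G (\<Theta> s)))" if "r \<ge> 1" for r s
  proof (cases "s \<in> {0..t}")
    case True
    have "\<bar>D r (\<Theta> s) \<bullet> G (\<Theta> s)\<bar> \<le> norm (D r (\<Theta> s)) * norm (G (\<Theta> s))" by (rule Cauchy_Schwarz_ineq2)
    also have "\<dots> \<le> K * norm (G (\<Theta> s))" by (rule mult_right_mono[OF D_bound[OF \<Theta>_bound[OF True] that] norm_ge_zero])
    finally show ?thesis using True by simp
  qed simp
  show "\<forall>\<^sub>F r in at_top. AE s in lborel.
      norm (indicator {0..t} s *\<^sub>R (D r (\<Theta> s) \<bullet> G (\<Theta> s))) \<le> indicator {0..t} s *\<^sub>R (K * norm (G (\<Theta> s)))"
    using eventually_ge_at_top[of "1::real"] by eventually_elim (intro AE_I2 dominated)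
qed

section \<open>Gradient of the realisation function\<close>

lemma layer_induct [case_names input first_layer hidden_layer]:
  assumes "P 0" "P (Suc 0)" "\<And>k. P (Suc k) \<Longrightarrow> P (Suc (Suc k))"
  shows "P n"
proof (induction n)
  case (Suc n)
  then show ?case using assms by (cases n) auto
qed (use assms in simp)

definition affine_grad :: "(nat \<Rightarrow> nat) \<Rightarrow> (nat \<Rightarrow> 'd::finite) \<Rightarrow> nat \<Rightarrow> real^'d \<Rightarrow> (nat \<Rightarrow> real)
    \<Rightarrow> (nat \<Rightarrow> real^'d) \<Rightarrow> nat \<Rightarrow> real^'d" where
  "affine_grad l idx k \<theta> y dy i = axis (idx (l k * l (k - 1) + i + dpar l (k - 1))) 1 +
     (\<Sum>j=1..l (k - 1). y j *\<^sub>R axis (idx ((i - 1) * l (k - 1) + j + dpar l (k - 1))) 1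
        + weight l idx k \<theta> i j *\<^sub>R dy j)"

text \<open>\<open>act'\<close> stands for the derivative of \<open>act\<close>; for ReLU its choice (\<open>relu_deriv\<close> below) is what
  defines the generalised gradient.\<close>

fun net_grad :: "(nat \<Rightarrow> nat) \<Rightarrow> (nat \<Rightarrow> 'd::finite) \<Rightarrow> (nat \<Rightarrow> real \<Rightarrow> real) \<Rightarrow> (nat \<Rightarrow> real \<Rightarrow> real)
    \<Rightarrow> real^'d \<Rightarrow> nat \<Rightarrow> (nat \<Rightarrow> real) \<Rightarrow> nat \<Rightarrow> real^'d" where
  "net_grad l idx act act' \<theta> 0 x = (\<lambda>i. 0)"
| "net_grad l idx act act' \<theta> (Suc 0) x = affine_grad l idx 1 \<theta> x (\<lambda>j. 0)"
| "net_grad l idx act act' \<theta> (Suc (Suc k)) x =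
     affine_grad l idx (Suc (Suc k)) \<theta> (\<lambda>j. act (Suc k) (net l idx act \<theta> (Suc k) x j))
       (\<lambda>j. act' (Suc k) (net l idx act \<theta> (Suc k) x j) *\<^sub>R net_grad l idx act act' \<theta> (Suc k) x j)"

lemma has_derivative_vec_nth_axis:
  "((\<lambda>\<theta>::real^'d. \<theta> $ c) has_derivative (\<lambda>h. axis c 1 \<bullet> h)) (at \<theta>0)"
  using bounded_linear.has_derivative[OF bounded_linear_vec_nth has_derivative_ident]
  by (simp add: inner_axis')

lemma has_derivative_affine:
  assumes "\<And>j. ((\<lambda>\<theta>. Y \<theta> j) has_derivative (\<lambda>h. dY j \<bullet> h)) (at \<theta>0)"
  shows "((\<lambda>\<theta>. affine l idx k \<theta> (Y \<theta>) i) has_derivative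
           (\<lambda>h. affine_grad l idx k \<theta>0 (Y \<theta>0) dY i \<bullet> h)) (at \<theta>0)"
  unfolding affine_def bias_def affine_grad_def weight_def
  by (rule has_derivative_eq_rhs[OF has_derivative_add[OF has_derivative_vec_nth_axis
        has_derivative_sum[OF has_derivative_mult[OF has_derivative_vec_nth_axis assms]]]])
     (simp add: inner_add_left inner_sum_left algebra_simps)

lemma has_derivative_net:
  assumes act: "\<And>k y. (act k has_real_derivative act' k y) (at y)"
  shows "((\<lambda>\<theta>. net l idx act \<theta> k x i) has_derivative (\<lambda>h. net_grad l idx act act' \<theta>0 k x i \<bullet> h)) (at \<theta>0)"
proof (induction k arbitrary: i rule: layer_induct)
  case input
  show ?case by (simp add: inner_zero_left[abs_def])
next
  case first_layer
  show ?case using has_derivative_affine[where Y="\<lambda>_. x" and dY="\<lambda>_. 0"] by simp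
next
  case (hidden_layer k)
  have layer_deriv: "((\<lambda>\<theta>. act (Suc k) (net l idx act \<theta> (Suc k) x j)) has_derivative
         (\<lambda>h. (act' (Suc k) (net l idx act \<theta>0 (Suc k) x j) *\<^sub>R net_grad l idx act act' \<theta>0 (Suc k) x j) \<bullet> h))
        (at \<theta>0)" for j
    by (rule has_derivative_eq_rhs,
        rule has_derivative_compose[OF hidden_layer has_field_derivative_imp_has_derivative[OF act]]) simp
  show ?case
    using has_derivative_affine[where Y="\<lambda>\<theta> j. act (Suc k) (net l idx act \<theta> (Suc k) x j)", OF layer_deriv]
    by simp
qed

lemma continuous_on_net:
  assumes act: "\<And>k y. (act k has_real_derivative act' k y) (at y)"
  shows "continuous_on UNIV (\<lambda>\<theta>. net l idx act \<theta> k x i)"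
  unfolding continuous_on_eq_continuous_at[OF open_UNIV]
  using has_derivative_continuous[OF has_derivative_net[where act=act and act'=act', OF act]] by blast

lemma continuous_on_net_grad:
  assumes act: "\<And>k y. (act k has_real_derivative act' k y) (at y)"
    and act'_cont: "\<And>k. continuous_on UNIV (act' k)"
  shows "continuous_on UNIV (\<lambda>\<theta>. net_grad l idx act act' \<theta> k x i)"
proof (induction k arbitrary: i rule: layer_induct)
  case first_layer
  then show ?case by (simp add: affine_grad_def weight_def continuous_intros)
next
  case (hidden_layer k)
  have act_cont: "continuous_on UNIV (act k)" for k
    using act DERIV_isCont continuous_at_imp_continuous_on by blast
  have "continuous_on UNIV (\<lambda>\<theta>. act (Suc k) (net l idx act \<theta> (Suc k) x j))"
    "continuous_on UNIV (\<lambda>\<theta>. act' (Suc k) (net l idx act \<theta> (Suc k) x j))" for j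
    by (auto intro: continuous_on_compose2[OF _ continuous_on_net[OF act]] act_cont act'_cont)
  then show ?case
    by (simp add: affine_grad_def weight_def) (intro continuous_intros hidden_layer)
qed simp

lemma net_measurable:
  assumes "\<And>k. act k \<in> borel_measurable borel" "\<And>k. act' k \<in> borel_measurable borel"
    and input_measurable: "\<And>j. j \<in> {1..l 0} \<Longrightarrow> (\<lambda>x. x j) \<in> borel_measurable M"
  shows "(\<lambda>x. net l idx act \<theta> (Suc k) x i) \<in> borel_measurable M \<and>
         (\<lambda>x. net_grad l idx act act' \<theta> (Suc k) x i) \<in> borel_measurable M"
proof (induction k arbitrary: i)
  case 0
  show ?case
    by (simp add: affine_def affine_grad_def)
       (intro conjI borel_measurable_add borel_measurable_sum borel_measurable_times
         borel_measurable_scaleR borel_measurable_const input_measurable; simp)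
next
  case (Suc k)
  have "(\<lambda>x. act (Suc k) (net l idx act \<theta> (Suc k) x j)) \<in> borel_measurable M"
    "(\<lambda>x. act' (Suc k) (net l idx act \<theta> (Suc k) x j)) \<in> borel_measurable M" for j
    using Suc.IH[of j] assms(1,2) by (auto intro: measurable_compose)
  then show ?case
    by (simp add: affine_def affine_grad_def)
       (intro conjI borel_measurable_add borel_measurable_sum borel_measurable_times
         borel_measurable_scaleR borel_measurable_const Suc.IH[THEN conjunct2])
qed

lemma net_zero_params: "net l idx act 0 (Suc k) x i = 0"
  by (cases k) (auto simp: affine_def bias_def weight_def)

lemma abs_affine_le:
  assumes "norm \<theta> \<le> \<rho>" "\<And>j. j \<in> {1..l (k - 1)} \<Longrightarrow> \<bar>y j\<bar> \<le> M"
  shows "\<bar>affine l idx k \<theta> y i\<bar> \<le> \<rho> + real (l (k - 1)) * (\<rho> * M)"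
proof -
  have coord: "\<bar>\<theta> $ c\<bar> \<le> \<rho>" for c using component_le_norm_cart[of \<theta> c] assms(1) by simp
  have "\<bar>affine l idx k \<theta> y i\<bar> \<le> \<bar>bias l idx k \<theta> i\<bar> + (\<Sum>j=1..l (k - 1). \<bar>weight l idx k \<theta> i j * y j\<bar>)"
    unfolding affine_def by (rule order_trans[OF abs_triangle_ineq add_left_mono[OF sum_abs]])
  also have "\<dots> \<le> \<rho> + (\<Sum>j=1..l (k - 1). \<rho> * M)"
  proof (intro add_mono sum_mono)
    show "\<bar>bias l idx k \<theta> i\<bar> \<le> \<rho>" unfolding bias_def by (rule coord)
    fix j assume "j \<in> {1..l (k - 1)}"
    then show "\<bar>weight l idx k \<theta> i j * y j\<bar> \<le> \<rho> * M"
      unfolding abs_mult weight_def using order_trans[OF norm_ge_zero assms(1)]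
      by (intro mult_mono coord assms(2)) auto
  qed
  finally show ?thesis by simp
qed

lemma norm_affine_grad_le:
  assumes "norm \<theta> \<le> \<rho>" "\<And>j. j \<in> {1..l (k - 1)} \<Longrightarrow> \<bar>y j\<bar> \<le> M \<and> norm (dy j) \<le> M'"
  shows "norm (affine_grad l idx k \<theta> y dy i) \<le> 1 + real (l (k - 1)) * (M + \<rho> * M')"
proof -
  have coord: "\<bar>\<theta> $ c\<bar> \<le> \<rho>" for c using component_le_norm_cart[of \<theta> c] assms(1) by simp
  let ?summand = "\<lambda>j. y j *\<^sub>R axis (idx ((i - 1) * l (k - 1) + j + dpar l (k - 1))) (1::real)
                       + weight l idx k \<theta> i j *\<^sub>R dy j"
  have "norm (affine_grad l idx k \<theta> y dy i) \<le> 1 + (\<Sum>j=1..l (k - 1). norm (?summand j))"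
    unfolding affine_grad_def
    by (rule order_trans[OF norm_triangle_ineq add_mono[OF _ norm_sum]]) (simp add: norm_axis_1)
  also have "\<dots> \<le> 1 + (\<Sum>j=1..l (k - 1). M + \<rho> * M')"
  proof (intro add_mono sum_mono order_refl)
    fix j assume j: "j \<in> {1..l (k - 1)}"
    have "norm (?summand j) \<le> \<bar>y j\<bar> + \<bar>weight l idx k \<theta> i j\<bar> * norm (dy j)"
      by (rule order_trans[OF norm_triangle_ineq]) (simp add: norm_axis_1)
    also have "\<dots> \<le> M + \<rho> * M'"
      using assms(2)[OF j] coord order_trans[OF norm_ge_zero assms(1)] unfolding weight_def
      by (intro add_mono mult_mono) auto
    finally show "norm (?summand j) \<le> M + \<rho> * M'" .
  qed
  finally show ?thesis by simp
qed

definition admissible_activation :: "real \<Rightarrow> (nat \<Rightarrow> real \<Rightarrow> real) \<Rightarrow> (nat \<Rightarrow> real \<Rightarrow> real) \<Rightarrow> bool" where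
  "admissible_activation C act act' \<longleftrightarrow>
     (\<forall>k y. \<bar>act k y\<bar> \<le> \<bar>y\<bar>) \<and> (\<forall>k y. \<bar>act' k y\<bar> \<le> C) \<and>
     (\<forall>k. act k \<in> borel_measurable borel \<and> act' k \<in> borel_measurable borel)"

lemma net_bounded:
  assumes "0 \<le> \<rho>" "0 \<le> C"
  shows "\<exists>M. \<forall>act act' \<theta> x i. admissible_activation C act act' \<longrightarrow> norm \<theta> \<le> \<rho> \<longrightarrow>
     (\<forall>j\<in>{1..l 0}. \<bar>x j\<bar> \<le> \<beta>) \<longrightarrow>
     \<bar>net l idx act \<theta> (Suc k) x i\<bar> \<le> M \<and> norm (net_grad l idx act act' \<theta> (Suc k) x i) \<le> M"
proof (induction k)
  case 0
  let ?M = "max (\<rho> + real (l 0) * (\<rho> * \<beta>)) (1 + real (l 0) * \<beta>)"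
  have "\<bar>affine l idx (Suc 0) \<theta> x i\<bar> \<le> ?M \<and> norm (affine_grad l idx (Suc 0) \<theta> x (\<lambda>j. 0) i) \<le> ?M"
    if "norm \<theta> \<le> \<rho>" "\<forall>j\<in>{1..l 0}. \<bar>x j\<bar> \<le> \<beta>" for \<theta> :: "real^'a" and x i
    using abs_affine_le[of \<theta> \<rho> l "Suc 0" x \<beta> idx i]
      norm_affine_grad_le[of \<theta> \<rho> l "Suc 0" x \<beta> "\<lambda>j. 0" 0 idx i] that
    by (simp add: le_max_iff_disj)
  then show ?case by (intro exI[of _ ?M]) auto
next
  case (Suc k)
  then obtain M where M: "\<And>act act' \<theta> x i. admissible_activation C act act' \<Longrightarrow> norm \<theta> \<le> \<rho> \<Longrightarrow>
     \<forall>j\<in>{1..l 0}. \<bar>x j\<bar> \<le> \<beta> \<Longrightarrow>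
     \<bar>net l idx act \<theta> (Suc k) x i\<bar> \<le> M \<and> norm (net_grad l idx act act' \<theta> (Suc k) x i) \<le> M"
    by blast
  let ?M = "max (\<rho> + real (l (Suc k)) * (\<rho> * M)) (1 + real (l (Suc k)) * (M + \<rho> * (C * M)))"
  have "\<bar>net l idx act \<theta> (Suc (Suc k)) x i\<bar> \<le> ?M \<and> norm (net_grad l idx act act' \<theta> (Suc (Suc k)) x i) \<le> ?M"
    if adm: "admissible_activation C act act'" and \<theta>: "norm \<theta> \<le> \<rho>" and x: "\<forall>j\<in>{1..l 0}. \<bar>x j\<bar> \<le> \<beta>"
    for act act' and \<theta> :: "real^'a" and x i
  proof -
    note M_here = M[OF adm \<theta> x]
    have act_le: "\<bar>act (Suc k) (net l idx act \<theta> (Suc k) x j)\<bar> \<le> M" for j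
      using adm M_here[of j] unfolding admissible_activation_def by (meson order_trans)
    have grad_le: "norm (act' (Suc k) (net l idx act \<theta> (Suc k) x j) *\<^sub>R net_grad l idx act act' \<theta> (Suc k) x j)
        \<le> C * M" for j
      using adm M_here[of j] \<open>0 \<le> C\<close> unfolding admissible_activation_def by (auto intro!: mult_mono)
    have "\<bar>affine l idx (Suc (Suc k)) \<theta> (\<lambda>j. act (Suc k) (net l idx act \<theta> (Suc k) x j)) i\<bar>
        \<le> \<rho> + real (l (Suc (Suc k) - 1)) * (\<rho> * M)"
      using act_le by (intro abs_affine_le[OF \<theta>])
    moreover have "norm (affine_grad l idx (Suc (Suc k)) \<theta> (\<lambda>j. act (Suc k) (net l idx act \<theta> (Suc k) x j))
         (\<lambda>j. act' (Suc k) (net l idx act \<theta> (Suc k) x j) *\<^sub>R net_grad l idx act act' \<theta> (Suc k) x j) i)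
       \<le> 1 + real (l (Suc (Suc k) - 1)) * (M + \<rho> * (C * M))"
      using act_le grad_le by (intro norm_affine_grad_le[OF \<theta>]) auto
    ultimately show ?thesis by (simp add: le_max_iff_disj)
  qed
  then show ?case by blast
qed

lemma affine_diff:
  "affine l idx k \<theta> y i - affine l idx k \<theta> y' i = (\<Sum>j=1..l (k - 1). weight l idx k \<theta> i j * (y j - y' j))"
  by (simp add: affine_def sum_subtractf algebra_simps)

lemma tendsto_affine_grad:
  assumes "\<And>j. ((\<lambda>r. Y r j) \<longlongrightarrow> Y' j) F" "\<And>j. ((\<lambda>r. dY r j) \<longlongrightarrow> dY' j) F"
  shows "((\<lambda>r. affine_grad l idx k \<theta> (Y r) (dY r) i) \<longlongrightarrow> affine_grad l idx k \<theta> Y' dY' i) F"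
  unfolding affine_grad_def by (intro tendsto_intros assms)

section \<open>Smoothed ReLU activations\<close>

lemma tendsto_of_scaled_dist:
  fixes s u :: "real \<Rightarrow> real"
  assumes "\<forall>\<^sub>F r in F. s r \<ge> 1" and "((\<lambda>r. s r * \<bar>u r - v\<bar>) \<longlongrightarrow> 0) F"
  shows "(u \<longlongrightarrow> v) F"
proof -
  have "\<forall>\<^sub>F r in F. \<bar>u r - v\<bar> \<le> s r * \<bar>u r - v\<bar>"
    using assms(1)
  proof eventually_elim
    case (elim r)
    show ?case using mult_right_mono[OF elim abs_ge_zero[of "u r - v"]] by simp
  qed
  then have "((\<lambda>r. \<bar>u r - v\<bar>) \<longlongrightarrow> 0) F"
    using tendsto_sandwich[OF _ _ tendsto_const assms(2)] by simp
  then show ?thesis by (simp add: tendsto_rabs_zero_iff LIM_zero_iff)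
qed

lemma tendsto_inverse_root_powr: "((\<lambda>r::real. 1 / r powr (1 / real (Suc k))) \<longlongrightarrow> 0) at_top"
proof -
  have "((\<lambda>r::real. r powr (- (1 / real (Suc k)))) \<longlongrightarrow> 0) at_top"
    by (rule tendsto_neg_powr) (auto simp: filterlim_ident)
  moreover have "\<forall>\<^sub>F r in at_top. r powr (- (1 / real (Suc k))) = 1 / (r::real) powr (1 / real (Suc k))"
    using eventually_gt_at_top[of 0] by eventually_elim (simp add: powr_minus_divide)
  ultimately show ?thesis by (rule Lim_transform_eventually)
qed

lemma tendsto_root_powr_ratio:
  "((\<lambda>r::real. r powr (1 / real (Suc (Suc k))) / r powr (1 / real (Suc k))) \<longlongrightarrow> 0) at_top"
proof -
  have "1 / real (Suc (Suc k)) < 1 / real (Suc k)" by (intro divide_strict_left_mono) auto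
  then have "((\<lambda>r::real. r powr (1 / real (Suc (Suc k)) - 1 / real (Suc k))) \<longlongrightarrow> 0) at_top"
    by (intro tendsto_neg_powr) (auto simp: filterlim_ident)
  moreover have "\<forall>\<^sub>F r in at_top. r powr (1 / real (Suc (Suc k)) - 1 / real (Suc k))
      = (r::real) powr (1 / real (Suc (Suc k))) / r powr (1 / real (Suc k))"
    using eventually_gt_at_top[of 0] by eventually_elim (simp add: powr_diff)
  ultimately show ?thesis by (rule Lim_transform_eventually)
qed

definition act_r_deriv :: "(real \<Rightarrow> real \<Rightarrow> real) \<Rightarrow> real \<Rightarrow> nat \<Rightarrow> real \<Rightarrow> real" where
  "act_r_deriv R r k = deriv (act_r R r k)"

text \<open>The value 0 at the kink is forced: it is the limit of the derivatives of the smoothed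
  activations there.\<close>

definition relu_deriv :: "real \<Rightarrow> real" where
  "relu_deriv y = (if 0 < y then 1 else 0)"

lemma admissible_relu: "1 \<le> C \<Longrightarrow> admissible_activation C (\<lambda>_. relu) (\<lambda>_. relu_deriv)"
  unfolding admissible_activation_def relu_def[abs_def] relu_deriv_def[abs_def] by auto measurable

locale smoothed_relu =
  fixes R :: "real \<Rightarrow> real \<Rightarrow> real" and A B C :: real
  assumes A_pos: "0 < A" and A_less_B: "A < B"
    and R_C1: "\<forall>r\<ge>1. R r C1_differentiable_on UNIV"
    and R_low: "\<forall>r\<ge>1. \<forall>x. x \<le> A / r \<longrightarrow> R r x = 0"
    and R_bounds: "\<forall>r\<ge>1. \<forall>y. 0 \<le> R r y \<and> R r y \<le> max y 0"
    and R_high: "\<forall>r\<ge>1. \<forall>z. z \<ge> B / r \<longrightarrow> R r z = z"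
    and deriv_R_bound: "\<forall>r\<ge>1. \<forall>x. \<bar>deriv (R r) x\<bar> \<le> C"
begin

lemma B_pos: "0 < B"
  using A_pos A_less_B by simp

lemma C_nonneg: "0 \<le> C"
  using deriv_R_bound by (meson abs_ge_zero order_trans order_refl)

lemma R_has_real_derivative: "s \<ge> 1 \<Longrightarrow> (R s has_real_derivative deriv (R s) y) (at y)"
  using R_C1 unfolding C1_differentiable_on_eq by (simp add: DERIV_deriv_iff_real_differentiable)

lemma continuous_on_deriv_R: "s \<ge> 1 \<Longrightarrow> continuous_on UNIV (deriv (R s))"
proof -
  assume s: "s \<ge> 1"
  have "vector_derivative (R s) (at x) = deriv (R s) x" for x
    using R_has_real_derivative[OF s, of x]
    by (simp add: has_real_derivative_iff_has_vector_derivative vector_derivative_at)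
  then show ?thesis using R_C1 s unfolding C1_differentiable_on_eq by auto
qed

lemma R_lipschitz: "s \<ge> 1 \<Longrightarrow> \<bar>R s u - R s v\<bar> \<le> C * \<bar>u - v\<bar>"
  using field_differentiable_bound[where S=UNIV and f'="deriv (R s)" and f="R s" and x=u and y=v]
    R_has_real_derivative deriv_R_bound
  by (auto intro: has_field_derivative_at_within)

lemma abs_R_le: "s \<ge> 1 \<Longrightarrow> \<bar>R s y\<bar> \<le> \<bar>y\<bar>"
  using R_bounds[rule_format, of s y] by (cases "y \<ge> 0") (auto simp: max_def)

lemma abs_R_minus_relu_le: "s \<ge> 1 \<Longrightarrow> \<bar>R s v - relu v\<bar> \<le> B / s"
proof -
  assume s: "s \<ge> 1"
  have "0 < B / s" using B_pos s by simp
  consider "v \<le> 0" | "0 < v" "v < B / s" | "B / s \<le> v" by linarith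
  then show ?thesis
  proof cases
    case 1
    then have "R s v = 0" using R_bounds[rule_format, of s v] s by (simp add: max_def)
    then show ?thesis using 1 \<open>0 < B / s\<close> by (simp add: relu_def)
  next
    case 2
    then have "0 \<le> R s v" "R s v \<le> v" using R_bounds[rule_format, of s v] s by auto
    then show ?thesis using 2 by (simp add: relu_def)
  qed (use R_high s \<open>0 < B / s\<close> in \<open>simp add: relu_def\<close>)
qed

lemma deriv_R_eq_0: "s \<ge> 1 \<Longrightarrow> u < A / s \<Longrightarrow> deriv (R s) u = 0"
proof -
  assume s: "s \<ge> 1" and u: "u < A / s"
  have "(R s has_real_derivative 0) (at u)"
    by (rule has_field_derivative_transform_within_open[where f="\<lambda>_. 0" and S="{..<A/s}"])
       (use u R_low s in auto)
  then show ?thesis using R_has_real_derivative[OF s] DERIV_unique by blast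
qed

lemma deriv_R_eq_1: "s \<ge> 1 \<Longrightarrow> u > B / s \<Longrightarrow> deriv (R s) u = 1"
proof -
  assume s: "s \<ge> 1" and u: "u > B / s"
  have "(R s has_real_derivative 1) (at u)"
    by (rule has_field_derivative_transform_within_open[where f="\<lambda>x. x" and S="{B/s<..}"])
       (use u R_high s in auto)
  then show ?thesis using R_has_real_derivative[OF s] DERIV_unique by blast
qed

text \<open>At a kink \<open>v = 0\<close> the hypothesis \<open>s |u - v| \<longlongrightarrow> 0\<close> eventually puts \<open>u\<close> below \<open>A / s\<close>,
  where \<open>R s\<close> is flat; this is why the convergence rate of the inner layers matters.\<close>

lemma tendsto_deriv_R:
  fixes s u :: "real \<Rightarrow> real"
  assumes s_ge: "\<forall>\<^sub>F r in at_top. s r \<ge> 1" and s_inverse: "((\<lambda>r. 1 / s r) \<longlongrightarrow> 0) at_top"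
    and rate: "((\<lambda>r. s r * \<bar>u r - v\<bar>) \<longlongrightarrow> 0) at_top"
  shows "((\<lambda>r. deriv (R (s r)) (u r)) \<longlongrightarrow> relu_deriv v) at_top"
proof -
  have u_lim: "(u \<longlongrightarrow> v) at_top" by (rule tendsto_of_scaled_dist[OF s_ge rate])
  consider "v > 0" | "v < 0" | "v = 0" by linarith
  then have "\<forall>\<^sub>F r in at_top. deriv (R (s r)) (u r) = relu_deriv v"
  proof cases
    case 1
    have "\<forall>\<^sub>F r in at_top. u r > v / 2" using u_lim by (rule order_tendstoD(1)) (use 1 in simp)
    moreover have "\<forall>\<^sub>F r in at_top. B * (1 / s r) < v / 2"
      using tendsto_mult_right_zero[OF s_inverse, of B] by (rule order_tendstoD(2)) (use 1 in simp)
    ultimately show ?thesis using s_ge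
    proof eventually_elim
      case (elim r)
      have "B * (1 / s r) < u r" using elim(1,2) by linarith
      then show ?case using elim(3) 1 by (simp add: relu_deriv_def deriv_R_eq_1)
    qed
  next
    case 2
    have "\<forall>\<^sub>F r in at_top. u r < 0" using u_lim by (rule order_tendstoD(2)) (use 2 in simp)
    then show ?thesis using s_ge
    proof eventually_elim
      case (elim r)
      have "0 < A / s r" using A_pos elim(2) by simp
      then show ?case using elim 2 by (auto simp: relu_deriv_def intro!: deriv_R_eq_0)
    qed
  next
    case 3
    have "\<forall>\<^sub>F r in at_top. s r * \<bar>u r - v\<bar> < A" using rate by (rule order_tendstoD(2)) (use A_pos in simp)
    then show ?thesis using s_ge
    proof eventually_elim
      case (elim r)
      have "s r * u r < A" using elim 3 abs_ge_self[of "u r"] by (smt (verit) mult_left_mono)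
      then have "u r < A / s r" using elim(2) by (simp add: pos_less_divide_eq mult.commute)
      then show ?case using elim 3 by (simp add: relu_deriv_def deriv_R_eq_0)
    qed
  qed
  then show ?thesis by (rule tendsto_eventually)
qed

lemma tendsto_R_relu:
  fixes s u :: "real \<Rightarrow> real"
  assumes s_ge: "\<forall>\<^sub>F r in at_top. s r \<ge> 1" and s_inverse: "((\<lambda>r. 1 / s r) \<longlongrightarrow> 0) at_top"
    and rate: "((\<lambda>r. s r * \<bar>u r - v\<bar>) \<longlongrightarrow> 0) at_top"
  shows "((\<lambda>r. R (s r) (u r)) \<longlongrightarrow> relu v) at_top"
proof -
  have "((\<lambda>r. \<bar>u r - v\<bar>) \<longlongrightarrow> 0) at_top"
    using tendsto_of_scaled_dist[OF s_ge rate] by (simp add: tendsto_rabs_zero_iff LIM_zero_iff)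
  then have bound_lim: "((\<lambda>r. C * \<bar>u r - v\<bar> + B * (1 / s r)) \<longlongrightarrow> 0) at_top"
    using tendsto_add[OF tendsto_mult_right_zero tendsto_mult_right_zero[OF s_inverse]] by simp
  have "\<forall>\<^sub>F r in at_top. \<bar>R (s r) (u r) - relu v\<bar> \<le> C * \<bar>u r - v\<bar> + B * (1 / s r)"
    using s_ge
  proof eventually_elim
    case (elim r)
    have "\<bar>R (s r) (u r) - relu v\<bar> \<le> \<bar>R (s r) (u r) - R (s r) v\<bar> + \<bar>R (s r) v - relu v\<bar>" by linarith
    also have "\<dots> \<le> C * \<bar>u r - v\<bar> + B / s r"
      using R_lipschitz[OF elim] abs_R_minus_relu_le[OF elim] by (rule add_mono)
    finally show ?case by simp
  qed
  then have "((\<lambda>r. \<bar>R (s r) (u r) - relu v\<bar>) \<longlongrightarrow> 0) at_top"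
    using tendsto_sandwich[OF _ _ tendsto_const bound_lim] by simp
  then show ?thesis by (simp add: tendsto_rabs_zero_iff LIM_zero_iff)
qed

lemma act_r_has_real_derivative:
  "r \<ge> 1 \<Longrightarrow> (act_r R r k has_real_derivative act_r_deriv R r k y) (at y)"
  using R_has_real_derivative[OF ge_one_powr_ge_zero[of r "1 / real k"]]
  by (simp add: act_r_def act_r_deriv_def)

lemma continuous_on_act_r_deriv: "r \<ge> 1 \<Longrightarrow> continuous_on UNIV (act_r_deriv R r k)"
  using continuous_on_deriv_R[OF ge_one_powr_ge_zero[of r "1 / real k"]]
  by (simp add: act_r_def[abs_def] act_r_deriv_def[abs_def])

lemma admissible_act_r:
  assumes "r \<ge> 1"
  shows "admissible_activation (max C 1) (act_r R r) (act_r_deriv R r)"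
proof -
  have s: "r powr (1 / real k) \<ge> 1" for k using assms by (simp add: ge_one_powr_ge_zero)
  have "continuous_on UNIV (act_r R r k)" for k
    using act_r_has_real_derivative[OF assms] DERIV_isCont continuous_at_imp_continuous_on by blast
  then show ?thesis
    unfolding admissible_activation_def
    using abs_R_le[OF s] deriv_R_bound s continuous_on_act_r_deriv[OF assms]
    by (auto simp: act_r_def act_r_deriv_def intro: borel_measurable_continuous_onI max.coboundedI1)
qed

lemma scaled_R_minus_relu_le:
  assumes "1 \<le> \<tau>" "\<tau> \<le> s"
  shows "\<tau> * \<bar>R s u - relu v\<bar> \<le> C * (s * \<bar>u - v\<bar>) + B * (\<tau> / s)"
proof -
  have "s \<ge> 1" using assms by simp
  have "\<bar>R s u - relu v\<bar> \<le> \<bar>R s u - R s v\<bar> + \<bar>R s v - relu v\<bar>" by linarith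
  also have "\<dots> \<le> C * \<bar>u - v\<bar> + B / s"
    using R_lipschitz[OF \<open>s \<ge> 1\<close>] abs_R_minus_relu_le[OF \<open>s \<ge> 1\<close>] by (rule add_mono)
  finally have "\<tau> * \<bar>R s u - relu v\<bar> \<le> \<tau> * (C * \<bar>u - v\<bar> + B / s)"
    using assms by (intro mult_left_mono) auto
  also have "\<dots> = C * (\<tau> * \<bar>u - v\<bar>) + B * (\<tau> / s)" by (simp add: algebra_simps)
  also have "\<dots> \<le> C * (s * \<bar>u - v\<bar>) + B * (\<tau> / s)"
    using assms C_nonneg by (intro add_mono mult_left_mono mult_right_mono) auto
  finally show ?thesis .
qed

text \<open>The exponents \<open>1/k\<close> make the induction work: an error \<open>o(r powr (-1/k))\<close> in layer \<open>k\<close> is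
  negligible at the smoothing scale \<open>r powr (-1/(k+1))\<close> of the next activation.\<close>

lemma net_act_r_error_rate:
  "((\<lambda>r. r powr (1 / real k) * \<bar>net l idx (act_r R r) \<theta> k x i - net l idx (\<lambda>_. relu) \<theta> k x i\<bar>) \<longlongrightarrow> 0)
     at_top"
proof (induction k arbitrary: i rule: layer_induct)
  case (hidden_layer k)
  define s where "s r = r powr (1 / real (Suc k))" for r :: real
  define \<tau> where "\<tau> r = r powr (1 / real (Suc (Suc k)))" for r :: real
  define u where "u j r = net l idx (act_r R r) \<theta> (Suc k) x j" for j r
  define v where "v j = net l idx (\<lambda>_. relu) \<theta> (Suc k) x j" for j
  define W where "W j = \<bar>weight l idx (Suc (Suc k)) \<theta> i j\<bar>" for j
  define err where "err r = \<bar>net l idx (act_r R r) \<theta> (Suc (Suc k)) x i - net l idx (\<lambda>_. relu) \<theta> (Suc (Suc k)) x i\<bar>"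
    for r
  define bound where "bound r = (\<Sum>j=1..l (Suc k). W j * (C * (s r * \<bar>u j r - v j\<bar>) + B * (\<tau> r / s r)))" for r
  have err_le: "\<tau> r * err r \<le> bound r" if r: "r \<ge> 1" for r
  proof -
    have "\<tau> r \<ge> 1" unfolding \<tau>_def using r by (simp add: ge_one_powr_ge_zero)
    have "\<tau> r \<le> s r" unfolding \<tau>_def s_def using r by (intro powr_mono) (auto simp: field_simps)
    have "err r \<le> (\<Sum>j=1..l (Suc k). W j * \<bar>R (s r) (u j r) - relu (v j)\<bar>)"
      unfolding err_def W_def
      by (simp add: affine_diff s_def u_def v_def act_r_def order_trans[OF sum_abs] abs_mult)
    then have "\<tau> r * err r \<le> \<tau> r * (\<Sum>j=1..l (Suc k). W j * \<bar>R (s r) (u j r) - relu (v j)\<bar>)"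
      using \<open>\<tau> r \<ge> 1\<close> by (intro mult_left_mono) auto
    also have "\<dots> = (\<Sum>j=1..l (Suc k). W j * (\<tau> r * \<bar>R (s r) (u j r) - relu (v j)\<bar>))"
      by (simp add: sum_distrib_left algebra_simps)
    also have "\<dots> \<le> bound r"
      unfolding bound_def using scaled_R_minus_relu_le[OF \<open>\<tau> r \<ge> 1\<close> \<open>\<tau> r \<le> s r\<close>]
      by (intro sum_mono mult_left_mono) (auto simp: W_def)
    finally show ?thesis .
  qed
  have "((\<lambda>r. \<tau> r / s r) \<longlongrightarrow> 0) at_top" unfolding \<tau>_def s_def by (rule tendsto_root_powr_ratio)
  then have "(bound \<longlongrightarrow> (\<Sum>j=1..l (Suc k). W j * (C * 0 + B * 0))) at_top"
    unfolding bound_def using hidden_layer unfolding s_def u_def v_def by (intro tendsto_intros)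
  then have bound_lim: "(bound \<longlongrightarrow> 0) at_top" by simp
  have "\<forall>\<^sub>F r in at_top. 0 \<le> \<tau> r * err r"
    using eventually_ge_at_top[of 1] by eventually_elim (simp add: \<tau>_def err_def)
  moreover have "\<forall>\<^sub>F r in at_top. \<tau> r * err r \<le> bound r"
    using eventually_ge_at_top[of 1] by eventually_elim (rule err_le)
  ultimately have "((\<lambda>r. \<tau> r * err r) \<longlongrightarrow> 0) at_top"
    by (rule tendsto_sandwich[OF _ _ tendsto_const bound_lim])
  then show ?case unfolding \<tau>_def err_def by simp
qed simp_all

lemma tendsto_net_act_r:
  "((\<lambda>r. net l idx (act_r R r) \<theta> k x i) \<longlongrightarrow> net l idx (\<lambda>_. relu) \<theta> k x i) at_top"
proof (rule tendsto_of_scaled_dist[OF _ net_act_r_error_rate])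
  show "\<forall>\<^sub>F r in at_top. 1 \<le> r powr (1 / real k)"
    using eventually_ge_at_top[of "1::real"] by eventually_elim (simp add: ge_one_powr_ge_zero)
qed

lemma tendsto_net_grad_act_r:
  "((\<lambda>r. net_grad l idx (act_r R r) (act_r_deriv R r) \<theta> k x i) \<longlongrightarrow>
      net_grad l idx (\<lambda>_. relu) (\<lambda>_. relu_deriv) \<theta> k x i) at_top"
proof (induction k arbitrary: i rule: layer_induct)
  case (hidden_layer k)
  define s where "s r = r powr (1 / real (Suc k))" for r :: real
  have s_ge: "\<forall>\<^sub>F r in at_top. s r \<ge> 1"
    using eventually_ge_at_top[of 1] by eventually_elim (simp add: s_def ge_one_powr_ge_zero)
  have s_inverse: "((\<lambda>r. 1 / s r) \<longlongrightarrow> 0) at_top" unfolding s_def by (rule tendsto_inverse_root_powr)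
  have rate: "((\<lambda>r. s r * \<bar>net l idx (act_r R r) \<theta> (Suc k) x j - net l idx (\<lambda>_. relu) \<theta> (Suc k) x j\<bar>) \<longlongrightarrow> 0)
      at_top" for j
    unfolding s_def by (rule net_act_r_error_rate)
  have act_eq: "act_r R r (Suc k) = R (s r)" "act_r_deriv R r (Suc k) = deriv (R (s r))" for r
    by (simp_all add: act_r_def act_r_deriv_def s_def)
  show ?case
    unfolding net_grad.simps act_eq
    by (intro tendsto_affine_grad tendsto_scaleR hidden_layer tendsto_R_relu[OF s_ge s_inverse rate]
        tendsto_deriv_R[OF s_ge s_inverse rate])
qed simp_all

end

section \<open>The risk along a generalised gradient flow\<close>

locale smoothed_risk = smoothed_relu R A B C for R A B C +
  fixes l :: "nat \<Rightarrow> nat" and idx :: "nat \<Rightarrow> 'd::finite" and L :: nat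
    and \<mu> :: "(nat \<Rightarrow> real) measure" and f :: "(nat \<Rightarrow> real) \<Rightarrow> (nat \<Rightarrow> real)" and a b :: real
  assumes L_pos: "L \<ge> 1"
    and sets_\<mu>: "sets \<mu> = sets (PiM {1..l 0} (\<lambda>_. restrict_space borel {a..b}))"
    and finite_\<mu>: "emeasure \<mu> (space \<mu>) < \<infinity>"
    and f_measurable: "\<forall>i\<in>{1..l L}. (\<lambda>x. f x i) \<in> borel_measurable \<mu>"
    and integrable_act_r: "\<forall>r\<ge>1. \<forall>\<theta>. integrable \<mu>
        (\<lambda>x. \<Sum>i=1..l L. (net l idx (act_r R r) \<theta> L x i - f x i)\<^sup>2)"
    and integrable_relu: "\<forall>\<theta>. integrable \<mu>
        (\<lambda>x. \<Sum>i=1..l L. (net l idx (\<lambda>_. relu) \<theta> L x i - f x i)\<^sup>2)"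
begin

definition sq_loss :: "(nat \<Rightarrow> real \<Rightarrow> real) \<Rightarrow> real^'d \<Rightarrow> (nat \<Rightarrow> real) \<Rightarrow> real" where
  "sq_loss act \<theta> x = (\<Sum>i=1..l L. (net l idx act \<theta> L x i - f x i)\<^sup>2)"

definition sq_loss_grad :: "(nat \<Rightarrow> real \<Rightarrow> real) \<Rightarrow> (nat \<Rightarrow> real \<Rightarrow> real) \<Rightarrow> real^'d \<Rightarrow> (nat \<Rightarrow> real) \<Rightarrow> real^'d"
  where "sq_loss_grad act act' \<theta> x =
    (\<Sum>i=1..l L. (2 * (net l idx act \<theta> L x i - f x i)) *\<^sub>R net_grad l idx act act' \<theta> L x i)"

definition risk_grad :: "(nat \<Rightarrow> real \<Rightarrow> real) \<Rightarrow> (nat \<Rightarrow> real \<Rightarrow> real) \<Rightarrow> real^'d \<Rightarrow> real^'d" where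
  "risk_grad act act' \<theta> = (\<integral>x. sq_loss_grad act act' \<theta> x \<partial>\<mu>)"

definition target_sq :: "(nat \<Rightarrow> real) \<Rightarrow> real" where
  "target_sq x = (\<Sum>i=1..l L. (f x i)\<^sup>2)"

lemma risk_eq_integral_sq_loss: "risk l idx L act \<mu> f \<theta> = (\<integral>x. sq_loss act \<theta> x \<partial>\<mu>)"
  by (simp add: risk_def sq_loss_def)

lemma finite_measure_\<mu>: "finite_measure \<mu>"
  using finite_\<mu> by (intro finite_measureI) simp

lemma space_\<mu>: "space \<mu> = space (PiM {1..l 0} (\<lambda>_. restrict_space borel {a..b}))"
  by (rule sets_eq_imp_space_eq[OF sets_\<mu>])

lemma abs_input_le: "x \<in> space \<mu> \<Longrightarrow> j \<in> {1..l 0} \<Longrightarrow> \<bar>x j\<bar> \<le> max \<bar>a\<bar> \<bar>b\<bar>"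
proof -
  assume "x \<in> space \<mu>" "j \<in> {1..l 0}"
  then have "x j \<in> {a..b}" by (auto simp: space_\<mu> space_PiM PiE_iff space_restrict_space)
  then show ?thesis by auto
qed

lemma input_measurable: "j \<in> {1..l 0} \<Longrightarrow> (\<lambda>x. x j) \<in> borel_measurable \<mu>"
  using measurable_component_singleton[of j "{1..l 0}" "\<lambda>_. restrict_space borel {a..b}"]
  by (simp add: measurable_cong_sets[OF sets_\<mu> refl] measurable_restrict_space2_iff)

text \<open>At \<open>\<theta> = 0\<close> the network vanishes, so \<open>integrable_relu\<close> yields integrability of \<open>|f|\<^sup>2\<close>.\<close>

lemma integrable_target_sq: "integrable \<mu> target_sq"
proof -
  have "net l idx (\<lambda>_. relu) 0 L x i = 0" for x i
    using net_zero_params[where k="L - 1"] L_pos by simp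
  then have "target_sq = (\<lambda>x. \<Sum>i=1..l L. (net l idx (\<lambda>_. relu) 0 L x i - f x i)\<^sup>2)"
    by (simp add: fun_eq_iff target_sq_def)
  then show ?thesis using integrable_relu by simp
qed

lemma abs_target_le: "i \<in> {1..l L} \<Longrightarrow> \<bar>f x i\<bar> \<le> 1 + target_sq x"
proof -
  assume i: "i \<in> {1..l L}"
  have "(f x i)\<^sup>2 \<le> target_sq x" unfolding target_sq_def by (rule member_le_sum[OF i]) auto
  moreover have "\<bar>f x i\<bar> \<le> 1 + (f x i)\<^sup>2"
    using zero_le_power2[of "\<bar>f x i\<bar> - 1"] by (simp add: power2_eq_square algebra_simps)
  ultimately show ?thesis by linarith
qed

lemma net_output_bounded:
  "\<exists>M\<ge>0. \<forall>act act' \<theta> x i. admissible_activation (max C 1) act act' \<longrightarrow> norm \<theta> \<le> \<rho> \<longrightarrow> x \<in> space \<mu> \<longrightarrow>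
      \<bar>net l idx act \<theta> L x i\<bar> \<le> M \<and> norm (net_grad l idx act act' \<theta> L x i) \<le> M"
proof -
  have L: "L = Suc (L - 1)" using L_pos by simp
  have "0 \<le> max \<rho> 0" "0 \<le> max C 1" by auto
  then obtain M where "\<forall>act act' \<theta> x i. admissible_activation (max C 1) act act' \<longrightarrow> norm \<theta> \<le> max \<rho> 0 \<longrightarrow>
     (\<forall>j\<in>{1..l 0}. \<bar>x j\<bar> \<le> max \<bar>a\<bar> \<bar>b\<bar>) \<longrightarrow>
     \<bar>net l idx act \<theta> (Suc (L - 1)) x i\<bar> \<le> M \<and> norm (net_grad l idx act act' \<theta> (Suc (L - 1)) x i) \<le> M"
    by (blast dest: net_bounded[where l=l and \<beta>="max \<bar>a\<bar> \<bar>b\<bar>" and idx=idx and k="L - 1"])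
  then show ?thesis
    using abs_input_le L by (intro exI[of _ "max M 0"]) (metis max.coboundedI1 max.cobounded2)
qed

lemma abs_sq_loss_le:
  assumes M: "\<And>i. \<bar>net l idx act \<theta> L x i\<bar> \<le> M"
  shows "\<bar>sq_loss act \<theta> x\<bar> \<le> 2 * real (l L) * M\<^sup>2 + 2 * target_sq x"
proof -
  have "(net l idx act \<theta> L x i - f x i)\<^sup>2 \<le> 2 * M\<^sup>2 + 2 * (f x i)\<^sup>2" for i
  proof -
    have "(net l idx act \<theta> L x i - f x i)\<^sup>2 \<le> 2 * (net l idx act \<theta> L x i)\<^sup>2 + 2 * (f x i)\<^sup>2"
      using zero_le_power2[of "net l idx act \<theta> L x i + f x i"] by (simp add: power2_eq_square algebra_simps)
    moreover have "\<bar>net l idx act \<theta> L x i\<bar>\<^sup>2 \<le> M\<^sup>2" using M by (intro power_mono) auto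
    ultimately show ?thesis by simp
  qed
  then have "\<bar>sq_loss act \<theta> x\<bar> \<le> (\<Sum>i=1..l L. 2 * M\<^sup>2 + 2 * (f x i)\<^sup>2)"
    unfolding sq_loss_def by (simp add: sum_nonneg sum_mono)
  also have "\<dots> = 2 * real (l L) * M\<^sup>2 + 2 * target_sq x"
    by (simp add: sum.distrib target_sq_def sum_distrib_left)
  finally show ?thesis .
qed

lemma norm_sq_loss_grad_le:
  assumes M: "\<And>i. \<bar>net l idx act \<theta> L x i\<bar> \<le> M \<and> norm (net_grad l idx act act' \<theta> L x i) \<le> M"
  shows "norm (sq_loss_grad act act' \<theta> x) \<le> 2 * real (l L) * M * (M + 1 + target_sq x)"
proof -
  have "norm (sq_loss_grad act act' \<theta> x) \<le> (\<Sum>i=1..l L. 2 * (M + 1 + target_sq x) * M)"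
    unfolding sq_loss_grad_def
  proof (intro order_trans[OF norm_sum] sum_mono)
    fix i assume "i \<in> {1..l L}"
    have "norm ((2 * (net l idx act \<theta> L x i - f x i)) *\<^sub>R net_grad l idx act act' \<theta> L x i)
        = 2 * \<bar>net l idx act \<theta> L x i - f x i\<bar> * norm (net_grad l idx act act' \<theta> L x i)"
      by (simp only: norm_scaleR abs_mult abs_numeral)
    also have "\<dots> \<le> 2 * (M + 1 + target_sq x) * M"
      using M[of i] abs_target_le[OF \<open>i \<in> {1..l L}\<close>, of x] by (intro mult_mono) auto
    finally show "norm ((2 * (net l idx act \<theta> L x i - f x i)) *\<^sub>R net_grad l idx act act' \<theta> L x i)
        \<le> 2 * (M + 1 + target_sq x) * M" .
  qed
  then show ?thesis by (simp add: algebra_simps)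
qed

lemma sq_loss_dominated:
  "\<exists>w. integrable \<mu> w \<and> (\<forall>act act' \<theta> x. admissible_activation (max C 1) act act' \<longrightarrow> norm \<theta> \<le> \<rho> \<longrightarrow>
      x \<in> space \<mu> \<longrightarrow> \<bar>sq_loss act \<theta> x\<bar> \<le> w x \<and> norm (sq_loss_grad act act' \<theta> x) \<le> w x)"
proof -
  obtain M where "M \<ge> 0" and M: "\<And>act act' \<theta> x i. admissible_activation (max C 1) act act' \<Longrightarrow>
      norm \<theta> \<le> \<rho> \<Longrightarrow> x \<in> space \<mu> \<Longrightarrow>
      \<bar>net l idx act \<theta> L x i\<bar> \<le> M \<and> norm (net_grad l idx act act' \<theta> L x i) \<le> M"
    using net_output_bounded by blast
  define w where "w x = 2 * real (l L) * M\<^sup>2 + 2 * target_sq x + 2 * real (l L) * M * (M + 1 + target_sq x)"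
    for x
  have "integrable \<mu> w"
    unfolding w_def using integrable_target_sq finite_measure.integrable_const[OF finite_measure_\<mu>]
    by (intro Bochner_Integration.integrable_add integrable_mult_right) auto
  moreover have "\<bar>sq_loss act \<theta> x\<bar> \<le> w x \<and> norm (sq_loss_grad act act' \<theta> x) \<le> w x"
    if "admissible_activation (max C 1) act act'" "norm \<theta> \<le> \<rho>" "x \<in> space \<mu>" for act act' \<theta> x
  proof -
    have "0 \<le> target_sq x" unfolding target_sq_def by (intro sum_nonneg) auto
    then have "0 \<le> 2 * real (l L) * M * (M + 1 + target_sq x)" "0 \<le> 2 * real (l L) * M\<^sup>2"
      using \<open>M \<ge> 0\<close> by simp_all
    then show ?thesis
      using abs_sq_loss_le[of act \<theta> x M] norm_sq_loss_grad_le[of act \<theta> x M act'] M[OF that]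
        \<open>0 \<le> target_sq x\<close> unfolding w_def by (intro conjI; smt (verit))
  qed
  ultimately show ?thesis by blast
qed

lemma sq_loss_measurable:
  assumes "admissible_activation C' act act'"
  shows "sq_loss act \<theta> \<in> borel_measurable \<mu>" "sq_loss_grad act act' \<theta> \<in> borel_measurable \<mu>"
proof -
  have "L = Suc (L - 1)" using L_pos by simp
  then have "(\<lambda>x. net l idx act \<theta> L x i) \<in> borel_measurable \<mu>"
    "(\<lambda>x. net_grad l idx act act' \<theta> L x i) \<in> borel_measurable \<mu>" for i
    using net_measurable[OF _ _ input_measurable, of act act' l idx \<theta> "L - 1" i] assms
    unfolding admissible_activation_def by auto
  then show "sq_loss act \<theta> \<in> borel_measurable \<mu>" "sq_loss_grad act act' \<theta> \<in> borel_measurable \<mu>"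
    unfolding sq_loss_def[abs_def] sq_loss_grad_def[abs_def] using f_measurable
    by (intro borel_measurable_sum borel_measurable_power borel_measurable_diff borel_measurable_scaleR
        borel_measurable_times borel_measurable_const; auto)+
qed

lemma has_derivative_sq_loss:
  assumes "\<And>k y. (act k has_real_derivative act' k y) (at y)"
  shows "((\<lambda>\<theta>. sq_loss act \<theta> x) has_derivative (\<lambda>h. sq_loss_grad act act' \<theta>0 x \<bullet> h)) (at \<theta>0)"
proof -
  have "((\<lambda>\<theta>. (net l idx act \<theta> L x i - f x i)\<^sup>2) has_derivative
        (\<lambda>h. ((2 * (net l idx act \<theta>0 L x i - f x i)) *\<^sub>R net_grad l idx act act' \<theta>0 L x i) \<bullet> h)) (at \<theta>0)" for i
    by (rule has_derivative_eq_rhs,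
        rule has_derivative_power[OF has_derivative_diff[OF has_derivative_net[OF assms] has_derivative_const]])
       (simp add: algebra_simps)
  then show ?thesis unfolding sq_loss_def sq_loss_grad_def
    by (rule has_derivative_eq_rhs[OF has_derivative_sum]) (simp add: inner_sum_left)
qed

lemma integrable_sq_loss_grad:
  assumes "admissible_activation (max C 1) act act'"
  shows "integrable \<mu> (sq_loss_grad act act' \<theta>)"
proof -
  obtain w where "integrable \<mu> w" and w: "\<And>x. x \<in> space \<mu> \<Longrightarrow> norm (sq_loss_grad act act' \<theta> x) \<le> w x"
    using sq_loss_dominated[of "norm \<theta>"] assms by blast
  show ?thesis
    by (rule Bochner_Integration.integrable_bound[OF \<open>integrable \<mu> w\<close> sq_loss_measurable(2)[OF assms]])
       (use w in \<open>auto intro!: AE_I2 intro: order_trans[OF _ abs_ge_self]\<close>)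
qed

lemma has_derivative_risk_act_r:
  assumes "r \<ge> 1"
  shows "(risk l idx L (act_r R r) \<mu> f has_derivative (\<lambda>h. risk_grad (act_r R r) (act_r_deriv R r) \<theta>0 \<bullet> h))
           (at \<theta>0)"
proof -
  obtain w where "integrable \<mu> w" and w: "\<And>\<theta> x. norm \<theta> \<le> norm \<theta>0 + 1 \<Longrightarrow> x \<in> space \<mu> \<Longrightarrow>
      norm (sq_loss_grad (act_r R r) (act_r_deriv R r) \<theta> x) \<le> w x"
    using sq_loss_dominated[of "norm \<theta>0 + 1"] admissible_act_r[OF assms] by blast
  have "norm \<theta> \<le> norm \<theta>0 + 1" if "norm (\<theta> - \<theta>0) \<le> 1" for \<theta>
    using norm_triangle_ineq[of "\<theta> - \<theta>0" \<theta>0] that by simp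
  then show ?thesis
    unfolding risk_eq_integral_sq_loss[abs_def] risk_grad_def
    using integrable_act_r assms
    by (intro has_derivative_integral_dominated[OF _ _ _ \<open>integrable \<mu> w\<close>]
        integrable_sq_loss_grad admissible_act_r has_derivative_sq_loss act_r_has_real_derivative w)
       (auto simp: sq_loss_def[abs_def])
qed

lemma grad_risk_act_r:
  "r \<ge> 1 \<Longrightarrow> grad (risk l idx L (act_r R r) \<mu> f) \<theta> = risk_grad (act_r R r) (act_r_deriv R r) \<theta>"
  by (rule grad_eq_if_has_derivative[OF has_derivative_risk_act_r])

lemma continuous_on_risk_grad_act_r:
  assumes "r \<ge> 1"
  shows "continuous_on UNIV (risk_grad (act_r R r) (act_r_deriv R r))"
  unfolding risk_grad_def[abs_def]
proof (rule continuous_on_integral_dominated)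
  show "sq_loss_grad (act_r R r) (act_r_deriv R r) \<theta> \<in> borel_measurable \<mu>" for \<theta>
    by (rule sq_loss_measurable(2)[OF admissible_act_r[OF assms]])
  show "continuous_on UNIV (\<lambda>\<theta>. sq_loss_grad (act_r R r) (act_r_deriv R r) \<theta> x)" for x
    unfolding sq_loss_grad_def
    by (intro continuous_intros continuous_on_net[OF act_r_has_real_derivative[OF assms]]
        continuous_on_net_grad[OF act_r_has_real_derivative[OF assms] continuous_on_act_r_deriv[OF assms]])
  show "\<exists>w. integrable \<mu> w \<and> (\<forall>\<theta> x. norm \<theta> \<le> \<rho> \<longrightarrow> x \<in> space \<mu> \<longrightarrow>
      norm (sq_loss_grad (act_r R r) (act_r_deriv R r) \<theta> x) \<le> w x)" for \<rho>
    using sq_loss_dominated[of \<rho>] admissible_act_r[OF assms] by blast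
qed

lemma tendsto_risk_act_r:
  "((\<lambda>r. risk l idx L (act_r R r) \<mu> f \<theta>) \<longlongrightarrow> risk l idx L (\<lambda>_. relu) \<mu> f \<theta>) at_top"
proof -
  obtain w where "integrable \<mu> w" and w: "\<And>act act' x. admissible_activation (max C 1) act act' \<Longrightarrow>
      x \<in> space \<mu> \<Longrightarrow> \<bar>sq_loss act \<theta> x\<bar> \<le> w x"
    using sq_loss_dominated[of "norm \<theta>"] by blast
  show ?thesis
    unfolding risk_eq_integral_sq_loss
  proof (rule integral_dominated_convergence_eventually_at_top[OF _ _ \<open>integrable \<mu> w\<close>])
    show "sq_loss (\<lambda>_. relu) \<theta> \<in> borel_measurable \<mu>"
      by (rule sq_loss_measurable(1)[OF admissible_relu[of 1]]) simp
    show "\<forall>\<^sub>F r in at_top. sq_loss (act_r R r) \<theta> \<in> borel_measurable \<mu>"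
      using eventually_ge_at_top[of "1::real"] by eventually_elim (rule sq_loss_measurable(1)[OF admissible_act_r])
    show "AE x in \<mu>. ((\<lambda>r. sq_loss (act_r R r) \<theta> x) \<longlongrightarrow> sq_loss (\<lambda>_. relu) \<theta> x) at_top"
      unfolding sq_loss_def by (intro AE_I2 tendsto_intros tendsto_net_act_r)
    show "\<forall>\<^sub>F r in at_top. AE x in \<mu>. norm (sq_loss (act_r R r) \<theta> x) \<le> w x"
      using eventually_ge_at_top[of "1::real"] by eventually_elim (auto intro: AE_I2 w admissible_act_r)
  qed
qed

lemma tendsto_risk_grad_act_r:
  "((\<lambda>r. risk_grad (act_r R r) (act_r_deriv R r) \<theta>) \<longlongrightarrow> risk_grad (\<lambda>_. relu) (\<lambda>_. relu_deriv) \<theta>) at_top"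
proof -
  obtain w where "integrable \<mu> w" and w: "\<And>act act' x. admissible_activation (max C 1) act act' \<Longrightarrow>
      x \<in> space \<mu> \<Longrightarrow> norm (sq_loss_grad act act' \<theta> x) \<le> w x"
    using sq_loss_dominated[of "norm \<theta>"] by blast
  show ?thesis
    unfolding risk_grad_def
  proof (rule integral_dominated_convergence_eventually_at_top[OF _ _ \<open>integrable \<mu> w\<close>])
    show "sq_loss_grad (\<lambda>_. relu) (\<lambda>_. relu_deriv) \<theta> \<in> borel_measurable \<mu>"
      by (rule sq_loss_measurable(2)[OF admissible_relu[of 1]]) simp
    show "\<forall>\<^sub>F r in at_top. sq_loss_grad (act_r R r) (act_r_deriv R r) \<theta> \<in> borel_measurable \<mu>"
      using eventually_ge_at_top[of "1::real"] by eventually_elim (rule sq_loss_measurable(2)[OF admissible_act_r])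
    show "AE x in \<mu>. ((\<lambda>r. sq_loss_grad (act_r R r) (act_r_deriv R r) \<theta> x) \<longlongrightarrow>
        sq_loss_grad (\<lambda>_. relu) (\<lambda>_. relu_deriv) \<theta> x) at_top"
      unfolding sq_loss_grad_def by (intro AE_I2 tendsto_intros tendsto_net_act_r tendsto_net_grad_act_r)
    show "\<forall>\<^sub>F r in at_top. AE x in \<mu>. norm (sq_loss_grad (act_r R r) (act_r_deriv R r) \<theta> x) \<le> w x"
      using eventually_ge_at_top[of "1::real"] by eventually_elim (auto intro: AE_I2 w admissible_act_r)
  qed
qed

lemma risk_grad_act_r_bounded:
  "\<exists>K. \<forall>\<theta> r. norm \<theta> \<le> \<rho> \<longrightarrow> r \<ge> 1 \<longrightarrow> norm (risk_grad (act_r R r) (act_r_deriv R r) \<theta>) \<le> K"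
proof -
  obtain w where "integrable \<mu> w" and w: "\<And>act act' \<theta> x. admissible_activation (max C 1) act act' \<Longrightarrow>
      norm \<theta> \<le> \<rho> \<Longrightarrow> x \<in> space \<mu> \<Longrightarrow> norm (sq_loss_grad act act' \<theta> x) \<le> w x"
    using sq_loss_dominated[of \<rho>] by blast
  have "norm (risk_grad (act_r R r) (act_r_deriv R r) \<theta>) \<le> (\<integral>x. w x \<partial>\<mu>)" if "norm \<theta> \<le> \<rho>" "r \<ge> 1" for \<theta> r
  proof -
    note adm = admissible_act_r[OF \<open>r \<ge> 1\<close>]
    have "norm (risk_grad (act_r R r) (act_r_deriv R r) \<theta>)
        \<le> (\<integral>x. norm (sq_loss_grad (act_r R r) (act_r_deriv R r) \<theta> x) \<partial>\<mu>)"
      unfolding risk_grad_def by (rule integral_norm_bound)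
    also have "\<dots> \<le> (\<integral>x. w x \<partial>\<mu>)"
      using integrable_sq_loss_grad[OF adm] \<open>integrable \<mu> w\<close> w[OF adm \<open>norm \<theta> \<le> \<rho>\<close>]
      by (intro integral_mono) auto
    finally show ?thesis .
  qed
  then show ?thesis by blast
qed

lemma risk_relu_along_gradient_flow:
  fixes G :: "real^'d \<Rightarrow> real^'d" and \<Theta> :: "real \<Rightarrow> real^'d"
  assumes G_lim: "\<forall>\<theta> g. ((\<lambda>r. grad (risk l idx L (act_r R r) \<mu> f) \<theta>) \<longlongrightarrow> g) at_top \<longrightarrow> G \<theta> = g"
    and \<Theta>_cont: "continuous_on {0..T} \<Theta>"
    and G_int: "set_integrable lborel {0..T} (\<lambda>s. G (\<Theta> s))"
    and \<Theta>_eq: "\<And>t. t \<in> {0..T} \<Longrightarrow> \<Theta> t = \<Theta> 0 - (LINT s:{0..t}|lborel. G (\<Theta> s))"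
    and t: "t \<in> {0..T}"
  shows "risk l idx L (\<lambda>_. relu) \<mu> f (\<Theta> t) =
           risk l idx L (\<lambda>_. relu) \<mu> f (\<Theta> 0) - (LINT s:{0..t}|lborel. (norm (G (\<Theta> s)))\<^sup>2)"
proof -
  let ?risk = "\<lambda>r. risk l idx L (act_r R r) \<mu> f"
  let ?D = "\<lambda>r. risk_grad (act_r R r) (act_r_deriv R r)"
  have D_lim: "((\<lambda>r. ?D r \<theta>) \<longlongrightarrow> G \<theta>) at_top" for \<theta>
  proof -
    have "\<forall>\<^sub>F r in at_top. ?D r \<theta> = grad (?risk r) \<theta>"
      using eventually_ge_at_top[of "1::real"] by eventually_elim (simp add: grad_risk_act_r)
    then have "((\<lambda>r. grad (?risk r) \<theta>) \<longlongrightarrow> risk_grad (\<lambda>_. relu) (\<lambda>_. relu_deriv) \<theta>) at_top"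
      by (rule Lim_transform_eventually[OF tendsto_risk_grad_act_r])
    with G_lim have "G \<theta> = risk_grad (\<lambda>_. relu) (\<lambda>_. relu_deriv) \<theta>" by blast
    then show ?thesis using tendsto_risk_grad_act_r by simp
  qed
  obtain \<rho> where \<rho>: "\<And>s. s \<in> {0..T} \<Longrightarrow> norm (\<Theta> s) \<le> \<rho>"
    using compact_imp_bounded[OF compact_continuous_image[OF \<Theta>_cont compact_Icc]]
    by (meson bounded_iff imageI)
  obtain K where K: "\<And>\<theta> r. norm \<theta> \<le> \<rho> \<Longrightarrow> r \<ge> 1 \<Longrightarrow> norm (?D r \<theta>) \<le> K"
    using risk_grad_act_r_bounded[of \<rho>] by blast
  have "\<forall>\<^sub>F r in at_top. ?risk r (\<Theta> 0) - (LINT s:{0..t}|lborel. ?D r (\<Theta> s) \<bullet> G (\<Theta> s)) = ?risk r (\<Theta> t)"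
    using eventually_ge_at_top[of "1::real"]
  proof eventually_elim
    case (elim r)
    show ?case
      using integral_curve_chain_rule[OF has_derivative_risk_act_r[OF elim]
          continuous_on_risk_grad_act_r[OF elim] \<Theta>_cont G_int \<Theta>_eq t] by simp
  qed
  moreover have "((\<lambda>r. ?risk r (\<Theta> 0) - (LINT s:{0..t}|lborel. ?D r (\<Theta> s) \<bullet> G (\<Theta> s))) \<longlongrightarrow>
      risk l idx L (\<lambda>_. relu) \<mu> f (\<Theta> 0) - (LINT s:{0..t}|lborel. (norm (G (\<Theta> s)))\<^sup>2)) at_top"
  proof (intro tendsto_diff tendsto_risk_act_r tendsto_integral_inner_along_curve[OF
        continuous_on_risk_grad_act_r D_lim K])
    show "continuous_on {0..t} \<Theta>" using \<Theta>_cont by (rule continuous_on_subset) (use t in auto)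
    show "set_integrable lborel {0..t} (\<lambda>s. G (\<Theta> s))"
      using G_int by (rule set_integrable_subset) (use t in auto)
  qed (use \<rho> t in auto)
  ultimately have "((\<lambda>r. ?risk r (\<Theta> t)) \<longlongrightarrow>
      risk l idx L (\<lambda>_. relu) \<mu> f (\<Theta> 0) - (LINT s:{0..t}|lborel. (norm (G (\<Theta> s)))\<^sup>2)) at_top"
    by (rule Lim_transform_eventually[rotated])
  then show ?thesis by (rule tendsto_unique[OF trivial_limit_at_top_linorder tendsto_risk_act_r])
qed

end

theorem proposition3p7:
  fixes L :: nat and l :: "nat \<Rightarrow> nat" and idx :: "nat \<Rightarrow> 'd::finite"
    and a b \<A> \<B> T :: real and R :: "real \<Rightarrow> real \<Rightarrow> real"
    and \<mu> :: "(nat \<Rightarrow> real) measure" and f :: "(nat \<Rightarrow> real) \<Rightarrow> (nat \<Rightarrow> real)"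
    and G :: "real^'d \<Rightarrow> real^'d" and \<Theta> :: "real \<Rightarrow> real^'d"
  assumes L_pos: "L \<ge> 1"
    and l_pos: "\<forall>k. l k \<ge> 1"
    and idx_bij: "bij_betw idx {1..dpar l L} (UNIV :: 'd set)"
    and ab: "a < b"
    and AB: "0 < \<A>" "\<A> < \<B>"
    and R_C1: "\<forall>r\<ge>1. R r C1_differentiable_on UNIV"
    and R_low: "\<forall>r\<ge>1. \<forall>x. x \<le> \<A> / r \<longrightarrow> R r x = 0"
    and R_bd: "\<forall>r\<ge>1. \<forall>y. 0 \<le> R r y \<and> R r y \<le> max y 0"
    and R_high: "\<forall>r\<ge>1. \<forall>z. z \<ge> \<B> / r \<longrightarrow> R r z = z"
    and R_deriv_bd: "\<exists>C. \<forall>r\<ge>1. \<forall>x. \<bar>deriv (R r) x\<bar> \<le> C"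
    and mu_sets: "sets \<mu> = sets (PiM {1..l 0} (\<lambda>_. restrict_space borel {a..b}))"
    and mu_fin: "emeasure \<mu> (space \<mu>) < \<infinity>"
    and f_meas: "\<forall>i\<in>{1..l L}. (\<lambda>x. f x i) \<in> borel_measurable \<mu>"
    and integrable_r: "\<forall>r\<ge>1. \<forall>\<theta>. integrable \<mu>
        (\<lambda>x. \<Sum>i=1..l L. (net l idx (act_r R r) \<theta> L x i - f x i)\<^sup>2)"
    and integrable_inf: "\<forall>\<theta>. integrable \<mu>
        (\<lambda>x. \<Sum>i=1..l L. (net l idx (\<lambda>_. relu) \<theta> L x i - f x i)\<^sup>2)"
    and G_lim: "\<forall>\<theta> g. ((\<lambda>r. grad (risk l idx L (act_r R r) \<mu> f) \<theta>) \<longlongrightarrow> g) at_top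
        \<longrightarrow> G \<theta> = g"
    and T_pos: "0 < T"
    and Theta_cont: "continuous_on {0..T} \<Theta>"
    and Theta_int: "\<forall>t\<in>{0..T}. set_integrable lborel {0..t} (\<lambda>s. G (\<Theta> s))"
    and Theta_eq: "\<forall>t\<in>{0..T}. \<Theta> t = \<Theta> 0 - (LINT s:{0..t}|lborel. G (\<Theta> s))"
  shows "\<forall>t\<in>{0..T}. risk l idx L (\<lambda>_. relu) \<mu> f (\<Theta> t) =
           risk l idx L (\<lambda>_. relu) \<mu> f (\<Theta> 0) - (LINT s:{0..t}|lborel. (norm (G (\<Theta> s)))\<^sup>2)"
proof -
  obtain C where "\<forall>r\<ge>1. \<forall>x. \<bar>deriv (R r) x\<bar> \<le> C" using R_deriv_bd by blast
  then interpret smoothed_risk R \<A> \<B> C l idx L \<mu> f a b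
    using AB R_C1 R_low R_bd R_high L_pos mu_sets mu_fin f_meas integrable_r integrable_inf
    by unfold_locales auto
  have "set_integrable lborel {0..T} (\<lambda>s. G (\<Theta> s))" using Theta_int T_pos by simp
  then show ?thesis
    using risk_relu_along_gradient_flow[OF G_lim Theta_cont _ Theta_eq[rule_format]] by blast
qed

end
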